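(* Let $k$ be an infinite $C_1$-field with $\operatorname{char} k\neq 2$ which is not algebraically closed. Let $a,b,c,d\in k$ with $a\in k\setminus k^2$, $b\neq 0$, and at least one of $c,d$ non-zero, and let $L_0=k(t_1,t_2,t_3,t_4)$ be a field extension of $k$ with $\operatorname{trdeg}_k(L_0)=2$ whose generators satisfy $t_1^2-at_2^2=b$ and $t_3^2-at_4^2=2ct_1+d$. Then $L_0$ is $k$-rational.
   Context: A field $k$ is a $C_1$-field if every homogeneous polynomial $f\in k[x_1,\dots,x_n]$ of degree less than $n$ has a non-trivial zero in $k^n$. A field extension is $k$-rational if it is purely transcendental over $k$. *)

theory Defs
  imports "HOL-Computational_Algebra.Polynomial"
begin

text \<open>Fields are modelled as subfields of an ambient field type.\<close>

definition subfield :: "'a::field set \<Rightarrow> bool" where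
  "subfield K \<longleftrightarrow> 0 \<in> K \<and> 1 \<in> K \<and>
     (\<forall>x\<in>K. \<forall>y\<in>K. x + y \<in> K \<and> x - y \<in> K \<and> x * y \<in> K) \<and>
     (\<forall>x\<in>K. inverse x \<in> K)"

definition gen_field :: "'a::field set \<Rightarrow> 'a set \<Rightarrow> 'a set" where
  "gen_field K S = \<Inter>{F. subfield F \<and> K \<union> S \<subseteq> F}"

definition homog_monos :: "nat \<Rightarrow> nat \<Rightarrow> (nat \<Rightarrow> nat) set" where
  "homog_monos n d = {\<alpha>. (\<forall>i\<ge>n. \<alpha> i = 0) \<and> sum \<alpha> {..<n} = d}"

definition C1_field :: "'a::field set \<Rightarrow> bool" where
  "C1_field K \<longleftrightarrow> (\<forall>n d (c :: (nat \<Rightarrow> nat) \<Rightarrow> 'a).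
     1 \<le> d \<and> d < n \<and> (\<forall>\<alpha>. c \<alpha> \<in> K) \<longrightarrow>
     (\<exists>x :: nat \<Rightarrow> 'a. (\<forall>i<n. x i \<in> K) \<and> (\<exists>i<n. x i \<noteq> 0) \<and>
        (\<Sum>\<alpha>\<in>homog_monos n d. c \<alpha> * (\<Prod>i<n. x i ^ \<alpha> i)) = 0))"

definition alg_closed_in :: "'a::field set \<Rightarrow> bool" where
  "alg_closed_in K \<longleftrightarrow> (\<forall>p :: 'a poly. set (coeffs p) \<subseteq> K \<and> degree p \<ge> 1 \<longrightarrow>
     (\<exists>x\<in>K. poly p x = 0))"

definition mono_eval :: "(nat \<Rightarrow> nat) \<Rightarrow> 'a::field list \<Rightarrow> 'a" where
  "mono_eval \<alpha> xs = (\<Prod>i<length xs. (xs ! i) ^ (\<alpha> i))"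

definition alg_indep :: "'a::field set \<Rightarrow> 'a list \<Rightarrow> bool" where
  "alg_indep K xs \<longleftrightarrow> (\<forall>(A :: (nat \<Rightarrow> nat) set) c.
     finite A \<and> (\<forall>\<alpha>\<in>A. \<forall>i\<ge>length xs. \<alpha> i = 0) \<and> (\<forall>\<alpha>\<in>A. c \<alpha> \<in> K) \<and>
     (\<Sum>\<alpha>\<in>A. c \<alpha> * mono_eval \<alpha> xs) = 0 \<longrightarrow> (\<forall>\<alpha>\<in>A. c \<alpha> = 0))"

definition algebraic_over :: "'a::field set \<Rightarrow> 'a \<Rightarrow> bool" where
  "algebraic_over F y \<longleftrightarrow> (\<exists>p :: 'a poly. p \<noteq> 0 \<and> set (coeffs p) \<subseteq> F \<and> poly p y = 0)"

definition has_trdeg :: "'a::field set \<Rightarrow> 'a set \<Rightarrow> nat \<Rightarrow> bool" where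
  "has_trdeg K L n \<longleftrightarrow> (\<exists>xs. length xs = n \<and> set xs \<subseteq> L \<and> alg_indep K xs \<and>
     (\<forall>y\<in>L. algebraic_over (gen_field K (set xs)) y))"

definition k_rational :: "'a::field set \<Rightarrow> 'a set \<Rightarrow> bool" where
  "k_rational K L \<longleftrightarrow> (\<exists>xs. alg_indep K xs \<and> L = gen_field K (set xs))"

end

theory Submission
  imports Defs
begin

text \<open>
  Since K is C1, the conic t1^2 - a t2^2 = b has a K-point (p, q). If t1 = p then t2 is in K and
  L0 = K(t3, t4) with t3^2 - a t4^2 in K, contradicting trdeg 2; otherwise the slope s of the line
  through (p, q) and (t1, t2) gives K(t1, t2) = K(s). Multiplying t3 + t4 \<surd>a by 1 + s \<surd>a, i.e. passing to x = t3 + a s t4 and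
  y = t4 + s t3, multiplies the norm by 1 - a s^2 and turns the second equation into
  x^2 - a y^2 = \<alpha> s^2 + \<beta> s + \<gamma> with \<alpha>, \<beta>, \<gamma> in K. So L0 = K(x, y, s) is the function field of a
  quadric surface, whose projective closure again has a K-point P. If P does not lie on the tangent
  plane at the generic point, projection from P identifies L0 with K(u, v). Otherwise that tangent
  plane is a linear relation among x, y, s: either it yields an algebraic relation between two of
  the generators, contradicting trdeg 2, or it forces \<alpha> s^2 + \<beta> s + \<gamma> = \<mu> (z0 s - s0)^2, and L0 is
  the function field over K(s) of a conic with constant coefficients, rational by projection.
\<close>

section \<open>Subfields\<close>

lemma subfield_zero: "subfield F \<Longrightarrow> 0 \<in> F" by (simp add: subfield_def)
lemma subfield_one: "subfield F \<Longrightarrow> 1 \<in> F" by (simp add: subfield_def)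
lemma subfield_add: "subfield F \<Longrightarrow> x \<in> F \<Longrightarrow> y \<in> F \<Longrightarrow> x + y \<in> F" by (simp add: subfield_def)
lemma subfield_diff: "subfield F \<Longrightarrow> x \<in> F \<Longrightarrow> y \<in> F \<Longrightarrow> x - y \<in> F" by (simp add: subfield_def)
lemma subfield_mult: "subfield F \<Longrightarrow> x \<in> F \<Longrightarrow> y \<in> F \<Longrightarrow> x * y \<in> F" by (simp add: subfield_def)
lemma subfield_inverse: "subfield F \<Longrightarrow> x \<in> F \<Longrightarrow> inverse x \<in> F" by (simp add: subfield_def)

lemma subfield_divide: "subfield F \<Longrightarrow> x \<in> F \<Longrightarrow> y \<in> F \<Longrightarrow> x / y \<in> F"
  by (simp add: divide_inverse subfield_mult subfield_inverse)

lemma subfield_uminus: "subfield F \<Longrightarrow> x \<in> F \<Longrightarrow> - x \<in> F"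
  using subfield_diff[of F 0 x] subfield_zero[of F] by simp

lemma subfield_power: "subfield F \<Longrightarrow> x \<in> F \<Longrightarrow> x ^ n \<in> F"
  by (induction n) (auto simp: subfield_one subfield_mult)

lemma subfield_of_nat: "subfield F \<Longrightarrow> of_nat n \<in> F"
  by (induction n) (auto simp: subfield_zero subfield_one subfield_add)

lemma subfield_numeral: "subfield F \<Longrightarrow> numeral n \<in> F"
  using subfield_of_nat[of F "numeral n"] by simp

lemma subfield_sum: "subfield F \<Longrightarrow> (\<And>x. x \<in> A \<Longrightarrow> f x \<in> F) \<Longrightarrow> sum f A \<in> F"
  by (induction A rule: infinite_finite_induct) (auto simp: subfield_zero subfield_add)

lemmas subfield_closed =
  subfield_add subfield_diff subfield_mult subfield_divide subfield_uminus subfield_power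

lemma subfield_gen_field: "subfield (gen_field K S)"
  unfolding gen_field_def subfield_def by blast

lemma gen_field_base: "x \<in> K \<Longrightarrow> x \<in> gen_field K S"
  unfolding gen_field_def by auto

lemma gen_field_gen: "x \<in> S \<Longrightarrow> x \<in> gen_field K S"
  unfolding gen_field_def by auto

lemma gen_field_least: "subfield F \<Longrightarrow> K \<subseteq> F \<Longrightarrow> S \<subseteq> F \<Longrightarrow> gen_field K S \<subseteq> F"
  unfolding gen_field_def by auto

lemma gen_field_subset: "S \<subseteq> gen_field K T \<Longrightarrow> gen_field K S \<subseteq> gen_field K T"
  by (rule gen_field_least[OF subfield_gen_field]) (auto intro: gen_field_base)

lemma gen_field_eqI: "S \<subseteq> gen_field K T \<Longrightarrow> T \<subseteq> gen_field K S \<Longrightarrow> gen_field K S = gen_field K T"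
  using gen_field_subset by blast

lemmas gen_field_closed = subfield_closed[OF subfield_gen_field]

lemma gen_field_one: "1 \<in> gen_field K S"
  by (rule subfield_one[OF subfield_gen_field])

lemma gen_field_numeral: "numeral n \<in> gen_field K S"
  by (rule subfield_numeral[OF subfield_gen_field])

lemma gen_field_mono: "S \<subseteq> T \<Longrightarrow> gen_field K S \<subseteq> gen_field K T"
  by (rule gen_field_subset) (auto intro: gen_field_gen)


section \<open>Linear dependence over a subfield\<close>

definition kspan :: "'a::field set \<Rightarrow> 'a set \<Rightarrow> 'a set" where
  "kspan K G = {y. \<exists>\<mu>. (\<forall>g\<in>G. \<mu> g \<in> K) \<and> y = (\<Sum>g\<in>G. \<mu> g * g)}"

lemma kspan_zero: "subfield K \<Longrightarrow> 0 \<in> kspan K G"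
  unfolding kspan_def by (rule CollectI, rule exI[of _ "\<lambda>_. 0"]) (auto simp: subfield_zero)

lemma kspan_add: "subfield K \<Longrightarrow> x \<in> kspan K G \<Longrightarrow> y \<in> kspan K G \<Longrightarrow> x + y \<in> kspan K G"
  unfolding kspan_def
proof (clarify)
  fix \<mu> \<nu> assume K: "subfield K" and "\<forall>g\<in>G. \<mu> g \<in> K" and "\<forall>g\<in>G. \<nu> g \<in> K"
  then show "\<exists>\<rho>. (\<forall>g\<in>G. \<rho> g \<in> K) \<and> (\<Sum>g\<in>G. \<mu> g * g) + (\<Sum>g\<in>G. \<nu> g * g) = (\<Sum>g\<in>G. \<rho> g * g)"
    by (intro exI[of _ "\<lambda>g. \<mu> g + \<nu> g"]) (auto simp: subfield_add[OF K] sum.distrib distrib_right)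
qed

lemma kspan_smult: "subfield K \<Longrightarrow> k \<in> K \<Longrightarrow> x \<in> kspan K G \<Longrightarrow> k * x \<in> kspan K G"
  unfolding kspan_def
proof (clarify)
  fix \<mu> assume K: "subfield K" and "k \<in> K" and "\<forall>g\<in>G. \<mu> g \<in> K"
  then show "\<exists>\<rho>. (\<forall>g\<in>G. \<rho> g \<in> K) \<and> k * (\<Sum>g\<in>G. \<mu> g * g) = (\<Sum>g\<in>G. \<rho> g * g)"
    by (intro exI[of _ "\<lambda>g. k * \<mu> g"]) (auto simp: subfield_mult[OF K] sum_distrib_left mult.assoc)
qed

lemma kspan_gen: "subfield K \<Longrightarrow> finite G \<Longrightarrow> g \<in> G \<Longrightarrow> g \<in> kspan K G"
  unfolding kspan_def
proof (rule CollectI, rule exI[of _ "\<lambda>h. if h = g then 1 else 0"], intro conjI)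
  assume "subfield K" "finite G" "g \<in> G"
  then show "\<forall>h\<in>G. (if h = g then 1 else 0) \<in> K" by (auto simp: subfield_zero subfield_one)
  have "(\<Sum>h\<in>G. (if h = g then 1 else 0) * h) = (\<Sum>h\<in>G. if h = g then h else 0)"
    by (rule sum.cong) auto
  then show "g = (\<Sum>h\<in>G. (if h = g then 1 else 0) * h)" using \<open>finite G\<close> \<open>g \<in> G\<close> by simp
qed

lemma kspan_sum: "subfield K \<Longrightarrow> (\<And>i. i \<in> I \<Longrightarrow> f i \<in> kspan K G) \<Longrightarrow> sum f I \<in> kspan K G"
  by (induction I rule: infinite_finite_induct) (auto simp: kspan_zero kspan_add)

lemma kspan_diff:
  assumes K: "subfield K" and "x \<in> kspan K G" and "y \<in> kspan K G"
  shows "x - y \<in> kspan K G"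
proof -
  have "(-1) * y \<in> kspan K G"
    using assms by (intro kspan_smult) (auto simp: subfield_one subfield_uminus)
  then show ?thesis using kspan_add[OF K \<open>x \<in> kspan K G\<close>, of "(-1) * y"] by simp
qed

lemma kspan_subset: "subfield K \<Longrightarrow> finite H \<Longrightarrow> G \<subseteq> kspan K H \<Longrightarrow> kspan K G \<subseteq> kspan K H"
proof
  fix y assume K: "subfield K" and "finite H" and G: "G \<subseteq> kspan K H" and "y \<in> kspan K G"
  then obtain \<mu> where \<mu>: "\<forall>g\<in>G. \<mu> g \<in> K" and y: "y = (\<Sum>g\<in>G. \<mu> g * g)" unfolding kspan_def by auto
  show "y \<in> kspan K H" unfolding y
    by (rule kspan_sum[OF K]) (use G \<mu> in \<open>auto intro: kspan_smult[OF K]\<close>)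
qed

lemma kspan_dependent:
  assumes K: "subfield K" and G: "finite G"
  shows "finite I \<Longrightarrow> card I > card G \<Longrightarrow> (\<forall>i\<in>I. f i \<in> kspan K G) \<Longrightarrow>
    \<exists>\<theta>. (\<forall>i\<in>I. \<theta> i \<in> K) \<and> (\<exists>i\<in>I. \<theta> i \<noteq> 0) \<and> (\<Sum>i\<in>I. \<theta> i * f i) = 0"
  using G
proof (induction G arbitrary: I f rule: finite_induct)
  case empty
  then obtain i0 where i0: "i0 \<in> I" by fastforce
  have "\<forall>i\<in>I. f i = 0" using empty.prems(3) unfolding kspan_def by auto
  then have "(\<Sum>i\<in>I. (if i = i0 then 1 else 0) * f i) = 0"
    by (intro sum.neutral) auto
  then show ?case
    by (intro exI[of _ "\<lambda>i. if i = i0 then 1 else 0"] conjI) (use i0 K in \<open>auto simp: subfield_zero subfield_one\<close>)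
next
  case (insert g G I f)
  from insert.prems(3) have "\<forall>i\<in>I. \<exists>\<mu>. (\<forall>h\<in>insert g G. \<mu> h \<in> K) \<and> f i = (\<Sum>h\<in>insert g G. \<mu> h * h)"
    unfolding kspan_def by auto
  then obtain \<mu> where \<mu>: "\<forall>i\<in>I. (\<forall>h\<in>insert g G. \<mu> i h \<in> K) \<and> f i = (\<Sum>h\<in>insert g G. \<mu> i h * h)"
    by metis
  have \<mu>K: "\<And>i h. i \<in> I \<Longrightarrow> h \<in> insert g G \<Longrightarrow> \<mu> i h \<in> K" using \<mu> by blast
  have f: "f i = \<mu> i g * g + (\<Sum>h\<in>G. \<mu> i h * h)" if "i \<in> I" for i
    using \<mu> that insert.hyps by simp
  show ?case
  proof (cases "\<forall>i\<in>I. \<mu> i g = 0")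
    case True
    then have "\<forall>i\<in>I. f i \<in> kspan K G" unfolding kspan_def using \<mu>K f by auto
    moreover have "card I > card G" using insert by simp
    ultimately show ?thesis using insert.IH insert.prems(1) by blast
  next
    case False
    then obtain i0 where i0: "i0 \<in> I" "\<mu> i0 g \<noteq> 0" by blast
    define I' where "I' = I - {i0}"
    define f' where "f' i = f i - (\<mu> i g / \<mu> i0 g) * f i0" for i
    have "card I' > card G" using insert i0 unfolding I'_def by (simp add: card_Diff_singleton)
    moreover have "\<forall>i\<in>I'. f' i \<in> kspan K G"
    proof
      fix i assume i: "i \<in> I'"
      then have iI: "i \<in> I" unfolding I'_def by simp
      define r where "r = \<mu> i g / \<mu> i0 g"
      have "f' i = (\<mu> i g * g - r * (\<mu> i0 g * g)) + ((\<Sum>h\<in>G. \<mu> i h * h) - r * (\<Sum>h\<in>G. \<mu> i0 h * h))"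
        unfolding f'_def f[OF iI] f[OF i0(1)] r_def by (simp add: algebra_simps)
      also have "\<mu> i g * g - r * (\<mu> i0 g * g) = 0" unfolding r_def using i0(2) by simp
      also have "r * (\<Sum>h\<in>G. \<mu> i0 h * h) = (\<Sum>h\<in>G. (r * \<mu> i0 h) * h)"
        by (simp add: sum_distrib_left mult.assoc)
      finally have "f' i = (\<Sum>h\<in>G. (\<mu> i h - r * \<mu> i0 h) * h)"
        by (simp add: sum_subtractf left_diff_distrib)
      moreover have "\<forall>h\<in>G. \<mu> i h - r * \<mu> i0 h \<in> K"
        unfolding r_def using \<mu>K iI i0 K by (auto intro!: subfield_closed)
      ultimately show "f' i \<in> kspan K G" unfolding kspan_def by auto
    qed
    ultimately obtain \<theta> where \<theta>K: "\<forall>i\<in>I'. \<theta> i \<in> K" and \<theta>nz: "\<exists>i\<in>I'. \<theta> i \<noteq> 0"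
      and rel: "(\<Sum>i\<in>I'. \<theta> i * f' i) = 0"
      using insert.IH[of I' f'] insert.prems(1) unfolding I'_def by auto
    define \<theta>' where "\<theta>' i = (if i = i0 then - (\<Sum>j\<in>I'. \<theta> j * (\<mu> j g / \<mu> i0 g)) else \<theta> i)" for i
    have "(\<Sum>i\<in>I. \<theta>' i * f i) = \<theta>' i0 * f i0 + (\<Sum>i\<in>I'. \<theta>' i * f i)"
      unfolding I'_def using insert.prems(1) i0(1) by (simp add: sum.remove)
    also have "(\<Sum>i\<in>I'. \<theta>' i * f i) = (\<Sum>i\<in>I'. \<theta> i * f i)"
      unfolding \<theta>'_def I'_def by (rule sum.cong) auto
    also have "\<theta>' i0 * f i0 + (\<Sum>i\<in>I'. \<theta> i * f i) = (\<Sum>i\<in>I'. \<theta> i * f' i)"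
      unfolding f'_def \<theta>'_def
      by (simp add: right_diff_distrib sum_subtractf sum_distrib_right mult.assoc)
    finally have "(\<Sum>i\<in>I. \<theta>' i * f i) = 0" using rel by simp
    moreover have "\<forall>i\<in>I. \<theta>' i \<in> K"
      unfolding \<theta>'_def using \<theta>K \<mu>K i0 K
      by (auto intro!: subfield_uminus subfield_sum subfield_mult subfield_divide simp: I'_def)
    moreover have "\<exists>i\<in>I. \<theta>' i \<noteq> 0" using \<theta>nz unfolding \<theta>'_def I'_def by auto
    ultimately show ?thesis by blast
  qed
qed

section \<open>Polynomials and rational functions in two elements\<close>

definition monom2 :: "'a::field \<Rightarrow> 'a \<Rightarrow> nat \<times> nat \<Rightarrow> 'a" where
  "monom2 w z ij = w ^ fst ij * z ^ snd ij"

definition tot_deg_le :: "nat \<Rightarrow> (nat \<times> nat) set" where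
  "tot_deg_le n = {ij. fst ij + snd ij \<le> n}"

definition polys_deg_le :: "'a::field set \<Rightarrow> 'a \<Rightarrow> 'a \<Rightarrow> nat \<Rightarrow> 'a set" where
  "polys_deg_le K w z n = kspan K (monom2 w z ` tot_deg_le n)"

definition rat_funs :: "'a::field set \<Rightarrow> 'a \<Rightarrow> 'a \<Rightarrow> 'a set" where
  "rat_funs K w z = {y. \<exists>e p q. p \<in> polys_deg_le K w z e \<and> q \<in> polys_deg_le K w z e \<and> q \<noteq> 0 \<and> y = p / q}"

lemma finite_tot_deg_le: "finite (tot_deg_le n)"
proof -
  have "tot_deg_le n \<subseteq> {..n} \<times> {..n}" unfolding tot_deg_le_def by auto
  then show ?thesis by (rule finite_subset) auto
qed

lemma monom_in_polys_deg_le: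
  assumes K: "subfield K" and "i + j \<le> n"
  shows "w ^ i * z ^ j \<in> polys_deg_le K w z n"
  unfolding polys_deg_le_def
proof (rule kspan_gen[OF K])
  show "finite (monom2 w z ` tot_deg_le n)" using finite_tot_deg_le by simp
  show "w ^ i * z ^ j \<in> monom2 w z ` tot_deg_le n" using assms(2)
    unfolding monom2_def tot_deg_le_def image_iff by (intro bexI[of _ "(i,j)"]) auto
qed

lemma polys_deg_le_mono:
  assumes K: "subfield K" and "m \<le> n"
  shows "polys_deg_le K w z m \<subseteq> polys_deg_le K w z n"
  unfolding polys_deg_le_def
proof (rule kspan_subset[OF K])
  show "finite (monom2 w z ` tot_deg_le n)" using finite_tot_deg_le by simp
  show "monom2 w z ` tot_deg_le m \<subseteq> kspan K (monom2 w z ` tot_deg_le n)"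
    using monom_in_polys_deg_le[OF K, of _ _ n w z] assms(2)
    unfolding polys_deg_le_def monom2_def tot_deg_le_def by auto
qed

lemma polys_deg_le_const: "subfield K \<Longrightarrow> k \<in> K \<Longrightarrow> k \<in> polys_deg_le K w z n"
  using kspan_smult[of K k 1] monom_in_polys_deg_le[of K 0 0 n w z]
  unfolding polys_deg_le_def by simp

lemma polys_deg_le_mult:
  assumes K: "subfield K" and x: "x \<in> polys_deg_le K w z m" and y: "y \<in> polys_deg_le K w z n"
  shows "x * y \<in> polys_deg_le K w z (m + n)"
proof -
  obtain \<mu> where \<mu>: "\<forall>g\<in>monom2 w z ` tot_deg_le m. \<mu> g \<in> K"
    and x: "x = (\<Sum>g\<in>monom2 w z ` tot_deg_le m. \<mu> g * g)"
    using x unfolding polys_deg_le_def kspan_def by auto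
  obtain \<nu> where \<nu>: "\<forall>h\<in>monom2 w z ` tot_deg_le n. \<nu> h \<in> K"
    and y: "y = (\<Sum>h\<in>monom2 w z ` tot_deg_le n. \<nu> h * h)"
    using y unfolding polys_deg_le_def kspan_def by auto
  have "(\<mu> g * \<nu> h) * (g * h) \<in> polys_deg_le K w z (m + n)"
    if g: "g \<in> monom2 w z ` tot_deg_le m" and h: "h \<in> monom2 w z ` tot_deg_le n" for g h
  proof -
    have "\<mu> g * \<nu> h \<in> K" using g h \<mu> \<nu> K by (blast intro: subfield_mult)
    from g obtain i j where "g = w ^ i * z ^ j" "i + j \<le> m" unfolding monom2_def tot_deg_le_def by auto
    moreover from h obtain k l where "h = w ^ k * z ^ l" "k + l \<le> n" unfolding monom2_def tot_deg_le_def by auto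
    ultimately have "g * h = w ^ (i + k) * z ^ (j + l)" "(i + k) + (j + l) \<le> m + n"
      by (auto simp: power_add mult_ac)
    then have "g * h \<in> polys_deg_le K w z (m + n)" using monom_in_polys_deg_le[OF K] by simp
    with \<open>\<mu> g * \<nu> h \<in> K\<close> show ?thesis unfolding polys_deg_le_def by (rule kspan_smult[OF K])
  qed
  then have "(\<Sum>g\<in>monom2 w z ` tot_deg_le m. \<Sum>h\<in>monom2 w z ` tot_deg_le n. (\<mu> g * \<nu> h) * (g * h))
      \<in> polys_deg_le K w z (m + n)"
    unfolding polys_deg_le_def by (intro kspan_sum[OF K]) auto
  moreover have "x * y = (\<Sum>g\<in>monom2 w z ` tot_deg_le m. \<Sum>h\<in>monom2 w z ` tot_deg_le n. (\<mu> g * \<nu> h) * (g * h))"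
    unfolding x y sum_product by (simp add: mult_ac)
  ultimately show ?thesis by simp
qed

lemma polys_deg_le_power:
  assumes K: "subfield K" and x: "x \<in> polys_deg_le K w z e"
  shows "x ^ k \<in> polys_deg_le K w z (k * e)"
proof (induction k)
  case 0
  then show ?case using polys_deg_le_const[OF K subfield_one[OF K]] by simp
next
  case (Suc k)
  then show ?case using polys_deg_le_mult[OF K x Suc] by (simp add: add.commute)
qed

lemma rat_funs_common_degreeE:
  assumes K: "subfield K" and "x1 \<in> rat_funs K w z" and "x2 \<in> rat_funs K w z"
  obtains e p1 q1 p2 q2 where "p1 \<in> polys_deg_le K w z e" "q1 \<in> polys_deg_le K w z e"
    "p2 \<in> polys_deg_le K w z e" "q2 \<in> polys_deg_le K w z e"
    "q1 \<noteq> 0" "q2 \<noteq> 0" "x1 = p1 / q1" "x2 = p2 / q2"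
proof -
  obtain e1 p1 q1 where 1: "p1 \<in> polys_deg_le K w z e1" "q1 \<in> polys_deg_le K w z e1" "q1 \<noteq> 0" "x1 = p1 / q1"
    using assms(2) unfolding rat_funs_def by auto
  obtain e2 p2 q2 where 2: "p2 \<in> polys_deg_le K w z e2" "q2 \<in> polys_deg_le K w z e2" "q2 \<noteq> 0" "x2 = p2 / q2"
    using assms(3) unfolding rat_funs_def by auto
  have lift: "p \<in> polys_deg_le K w z (max e1 e2)" if "p \<in> polys_deg_le K w z e'" "e' \<le> max e1 e2" for p e'
    using polys_deg_le_mono[OF K that(2)] that(1) by blast
  show thesis
    using that[of p1 "max e1 e2" q1 p2 q2] 1 2 lift[of p1 e1] lift[of q1 e1] lift[of p2 e2] lift[of q2 e2]
    by simp
qed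

lemma subfield_rat_funs:
  assumes K: "subfield K"
  shows "subfield (rat_funs K w z)"
proof -
  have one: "1 \<in> polys_deg_le K w z 0" and zero: "0 \<in> polys_deg_le K w z 0"
    using polys_deg_le_const[OF K] subfield_one[OF K] subfield_zero[OF K] by auto
  have "0 \<in> rat_funs K w z" "1 \<in> rat_funs K w z"
    unfolding rat_funs_def using one zero by force+
  moreover have "x + y \<in> rat_funs K w z \<and> x - y \<in> rat_funs K w z \<and> x * y \<in> rat_funs K w z"
    if xy: "x \<in> rat_funs K w z" "y \<in> rat_funs K w z" for x y
  proof -
    obtain e p1 q1 p2 q2 where pq: "p1 \<in> polys_deg_le K w z e" "q1 \<in> polys_deg_le K w z e"
      "p2 \<in> polys_deg_le K w z e" "q2 \<in> polys_deg_le K w z e" "q1 \<noteq> 0" "q2 \<noteq> 0" "x = p1 / q1" "y = p2 / q2"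
      using rat_funs_common_degreeE[OF K xy] .
    then have "p1 * q2 \<in> polys_deg_le K w z (e + e)" "p2 * q1 \<in> polys_deg_le K w z (e + e)"
      "p1 * p2 \<in> polys_deg_le K w z (e + e)" "q1 * q2 \<in> polys_deg_le K w z (e + e)"
      by (auto intro!: polys_deg_le_mult[OF K])
    moreover have "x + y = (p1 * q2 + p2 * q1) / (q1 * q2)" "x - y = (p1 * q2 - p2 * q1) / (q1 * q2)"
      "x * y = (p1 * p2) / (q1 * q2)" "q1 * q2 \<noteq> 0"
      using pq by (simp_all add: field_simps)
    ultimately show ?thesis
      unfolding rat_funs_def polys_deg_le_def
      by (metis (mono_tags, lifting) CollectI K kspan_add kspan_diff)
  qed
  moreover have "inverse x \<in> rat_funs K w z" if x: "x \<in> rat_funs K w z" for x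
  proof -
    obtain e p q where pq: "p \<in> polys_deg_le K w z e" "q \<in> polys_deg_le K w z e" "q \<noteq> 0" "x = p / q"
      using x unfolding rat_funs_def by auto
    show ?thesis
    proof (cases "p = 0")
      case True
      then show ?thesis using pq \<open>0 \<in> rat_funs K w z\<close> by simp
    next
      case False
      then show ?thesis unfolding rat_funs_def using pq by (intro CollectI exI[of _ e]) auto
    qed
  qed
  ultimately show ?thesis unfolding subfield_def by blast
qed

lemma gen_field_subset_rat_funs:
  assumes K: "subfield K"
  shows "gen_field K {w, z} \<subseteq> rat_funs K w z"
proof (rule gen_field_least[OF subfield_rat_funs[OF K]])
  have "y \<in> rat_funs K w z" if "y \<in> polys_deg_le K w z 1" for y
    unfolding rat_funs_def using that polys_deg_le_const[OF K subfield_one[OF K]]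
    by (intro CollectI exI[of _ 1] exI[of _ y] exI[of _ 1]) auto
  then show "K \<subseteq> rat_funs K w z" "{w, z} \<subseteq> rat_funs K w z"
    using polys_deg_le_const[OF K] monom_in_polys_deg_le[OF K, of 1 0 1 w z]
      monom_in_polys_deg_le[OF K, of 0 1 1 w z] by auto
qed

section \<open>Algebraic dependence of two elements\<close>

definition grlex_less :: "nat \<times> nat \<Rightarrow> nat \<times> nat \<Rightarrow> bool" where
  "grlex_less b a \<longleftrightarrow> fst b + snd b < fst a + snd a \<or> (fst b + snd b = fst a + snd a \<and> fst b < fst a)"

lemma grlex_max_exists:
  assumes "finite A" "A \<noteq> {}"
  obtains a where "a \<in> A" "\<forall>b\<in>A. b \<noteq> a \<longrightarrow> grlex_less b a"
proof -
  define D where "D = Max ((\<lambda>b. fst b + snd b) ` A)"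
  define A2 where "A2 = {b\<in>A. fst b + snd b = D}"
  have "D \<in> (\<lambda>b. fst b + snd b) ` A" unfolding D_def using assms by (intro Max_in) auto
  then obtain b0 where "b0 \<in> A" "fst b0 + snd b0 = D" by auto
  then have "b0 \<in> A2" unfolding A2_def by simp
  then have A2ne: "A2 \<noteq> {}" by auto
  have A2fin: "finite A2" using assms unfolding A2_def by auto
  have "Max (fst ` A2) \<in> fst ` A2" using A2ne A2fin by (intro Max_in) auto
  then obtain a where a: "a \<in> A2" "fst a = Max (fst ` A2)" by auto
  have "grlex_less b a" if b: "b \<in> A" "b \<noteq> a" for b
  proof -
    have "fst b + snd b \<le> D" unfolding D_def using assms b by (intro Max_ge) auto
    moreover have aD: "fst a + snd a = D" using a unfolding A2_def by auto
    moreover have "fst b < fst a" if "fst b + snd b = D"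
    proof -
      have "b \<in> A2" using b that unfolding A2_def by auto
      then have "fst b \<le> fst a" unfolding a(2) using A2fin by (intro Max_ge) auto
      moreover have "fst b \<noteq> fst a" using that aD b(2) by (metis add_left_cancel prod.expand)
      ultimately show ?thesis by simp
    qed
    ultimately show "grlex_less b a" unfolding grlex_less_def by linarith
  qed
  moreover have "a \<in> A" using a unfolding A2_def by simp
  ultimately show ?thesis using that by blast
qed

definition std_monos :: "'a::field \<Rightarrow> 'a \<Rightarrow> nat \<Rightarrow> nat \<times> nat \<Rightarrow> 'a set" where
  "std_monos w z n a = monom2 w z ` {ij \<in> tot_deg_le n. \<not> (fst a \<le> fst ij \<and> snd a \<le> snd ij)}"

lemma finite_std_monos: "finite (std_monos w z n a)"
  unfolding std_monos_def using finite_tot_deg_le by auto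

lemma card_std_monos_le: "card (std_monos w z n a) \<le> (fst a + snd a) * (n + 1)"
proof -
  let ?E = "{ij \<in> tot_deg_le n. \<not> (fst a \<le> fst ij \<and> snd a \<le> snd ij)}"
  have "?E \<subseteq> ({..<fst a} \<times> {..n}) \<union> ({..n} \<times> {..<snd a})"
    unfolding tot_deg_le_def by auto
  then have "card ?E \<le> card (({..<fst a} \<times> {..n}) \<union> ({..n} \<times> {..<snd a}))"
    by (intro card_mono) auto
  also have "\<dots> \<le> card ({..<fst a} \<times> {..n}) + card ({..n} \<times> {..<snd a})" by (rule card_Un_le)
  also have "\<dots> = (fst a + snd a) * (n + 1)" by (simp add: card_cartesian_product algebra_simps)
  finally show ?thesis
    using card_image_le[of ?E "monom2 w z"] finite_tot_deg_le unfolding std_monos_def by force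
qed

lemma monom_in_span_std_monos:
  assumes K: "subfield K" and A: "finite A" and cK: "\<forall>b\<in>A. c b \<in> K"
    and nz: "\<forall>b\<in>A. c b \<noteq> 0" and aA: "a \<in> A" and lead: "\<forall>b\<in>A. b \<noteq> a \<longrightarrow> grlex_less b a"
    and rel: "(\<Sum>b\<in>A. c b * monom2 w z b) = 0"
  shows "i + j \<le> n \<Longrightarrow> w ^ i * z ^ j \<in> kspan K (std_monos w z n a)"
proof -
  let ?S = "kspan K (std_monos w z n a)"
  have "\<forall>i j. i + j = d \<longrightarrow> d \<le> n \<longrightarrow> w ^ i * z ^ j \<in> ?S" for d
  proof (induction d rule: less_induct)
    case (less d)
    note lower_degree = less.IH
    have "\<forall>j. i + j = d \<longrightarrow> d \<le> n \<longrightarrow> w ^ i * z ^ j \<in> ?S" for i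
    proof (induction i rule: less_induct)
      case (less i)
      show ?case
      proof (intro allI impI)
        fix j assume ij: "i + j = d" and dn: "d \<le> n"
        show "w ^ i * z ^ j \<in> ?S"
        proof (cases "fst a \<le> i \<and> snd a \<le> j")
          case False
          then have "w ^ i * z ^ j \<in> std_monos w z n a"
            unfolding std_monos_def monom2_def tot_deg_le_def image_iff
            using ij dn by (intro bexI[of _ "(i,j)"]) auto
          then show ?thesis by (rule kspan_gen[OF K finite_std_monos])
        next
          case True
          text \<open>Multiply the relation by the monomial that shifts its leading exponent to (i, j) and
            solve for the leading term; all other terms are smaller in the graded order.\<close>
          define sh where "sh b = (fst b + (i - fst a), snd b + (j - snd a))" for b :: "nat \<times> nat"
          have sh_a: "monom2 w z (sh a) = w ^ i * z ^ j"
            unfolding sh_def monom2_def using True by simp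
          have "(\<Sum>b\<in>A. c b * monom2 w z (sh b)) = w ^ (i - fst a) * z ^ (j - snd a) * (\<Sum>b\<in>A. c b * monom2 w z b)"
            unfolding sh_def monom2_def sum_distrib_left by (simp add: power_add mult_ac)
          then have "c a * (w ^ i * z ^ j) + (\<Sum>b\<in>A - {a}. c b * monom2 w z (sh b)) = 0"
            using A aA rel sh_a by (simp add: sum.remove)
          then have "(\<Sum>b\<in>A - {a}. c b * monom2 w z (sh b)) = - (c a * (w ^ i * z ^ j))"
            by (simp add: eq_neg_iff_add_eq_0 add.commute)
          then have "(\<Sum>b\<in>A - {a}. (- (c b / c a)) * monom2 w z (sh b)) = w ^ i * z ^ j"
            using nz aA by (simp add: sum_distrib_left[symmetric] sum_negf flip: sum_divide_distrib)
          moreover have "(\<Sum>b\<in>A - {a}. (- (c b / c a)) * monom2 w z (sh b)) \<in> ?S"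
          proof (intro kspan_sum[OF K] kspan_smult[OF K])
            fix b assume b: "b \<in> A - {a}"
            show "- (c b / c a) \<in> K" using b aA cK K by (auto intro!: subfield_uminus subfield_divide)
            have "grlex_less b a" using lead b by auto
            then consider "fst (sh b) + snd (sh b) < d" | "fst (sh b) + snd (sh b) = d" "fst (sh b) < i"
              using ij True unfolding grlex_less_def sh_def by fastforce
            then show "monom2 w z (sh b) \<in> ?S"
            proof cases
              case 1
              then show ?thesis using lower_degree[of "fst (sh b) + snd (sh b)"] dn unfolding monom2_def by simp
            next
              case 2
              then show ?thesis using less.IH[of "fst (sh b)"] dn unfolding monom2_def by simp
            qed
          qed
          ultimately show ?thesis by simp
        qed
      qed
    qed
    then show ?case by blast
  qed
  then show "i + j \<le> n \<Longrightarrow> w ^ i * z ^ j \<in> ?S" by blast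
qed

definition alg_dependent_pair :: "'a::field set \<Rightarrow> 'a \<Rightarrow> 'a \<Rightarrow> bool" where
  "alg_dependent_pair K w z \<longleftrightarrow> (\<exists>A c. finite A \<and> (\<forall>b\<in>A. c b \<in> K) \<and> (\<exists>b\<in>A. c b \<noteq> 0) \<and>
     (\<Sum>b\<in>A. c b * monom2 w z b) = 0)"

lemma std_count_lt_square:
  fixes C e M :: nat
  assumes M: "M = 2 * C * (e + 1) + 1"
  shows "C * (2 * M * e + 1) < (M + 1) * (M + 1)"
proof -
  have "C * (2 * M * e + 1) \<le> C * (2 * M * e + 2 * M)" using M by (intro mult_le_mono2) simp
  also have "\<dots> = M * (2 * C * (e + 1))" by (simp add: algebra_simps)
  also have "\<dots> < (M + 1) * (M + 1)" using M by (intro mult_le_less_imp_less) auto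
  finally show ?thesis .
qed

lemma power_frac_homogenize:
  fixes p q :: "'a::field"
  assumes "q \<noteq> 0" and "i \<le> M"
  shows "p ^ i * q ^ (M - i) = q ^ M * (p / q) ^ i"
proof -
  have "q ^ M = q ^ i * q ^ (M - i)" using assms(2) by (simp flip: power_add)
  then show ?thesis using assms(1) by (simp add: power_divide field_simps)
qed

text \<open>Clearing denominators, the (M + 1)^2 monomials in x1, x2 of bidegree at most (M, M) become
  polynomials in w, z of degree at most 2 M e. Modulo the relation they lie in the span of the
  at most d (2 M e + 1) monomials not divisible by its leading monomial (of degree d), which is
  fewer for M large.\<close>

lemma alg_dependent_pair_gen_field:
  assumes K: "subfield K" and dep: "alg_dependent_pair K w z"
    and x1: "x1 \<in> gen_field K {w, z}" and x2: "x2 \<in> gen_field K {w, z}"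
  shows "alg_dependent_pair K x1 x2"
proof -
  obtain A c where A: "finite A" "A \<noteq> {}" and cK: "\<forall>b\<in>A. c b \<in> K" and nz: "\<forall>b\<in>A. c b \<noteq> 0"
    and rel: "(\<Sum>b\<in>A. c b * monom2 w z b) = 0"
  proof -
    obtain A c where A: "finite A" and cK: "\<forall>b\<in>A. c b \<in> K" and nz: "\<exists>b\<in>A. c b \<noteq> 0"
      and rel: "(\<Sum>b\<in>A. c b * monom2 w z b) = 0"
      using dep unfolding alg_dependent_pair_def by blast
    have "(\<Sum>b\<in>{b\<in>A. c b \<noteq> 0}. c b * monom2 w z b) = (\<Sum>b\<in>A. c b * monom2 w z b)"
      by (rule sum.mono_neutral_left) (use A in auto)
    then show thesis
      by (intro that[of "{b\<in>A. c b \<noteq> 0}" c]) (use A cK nz rel in auto)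
  qed
  obtain a where aA: "a \<in> A" and lead: "\<forall>b\<in>A. b \<noteq> a \<longrightarrow> grlex_less b a"
    using grlex_max_exists[OF A] by blast
  have std: "polys_deg_le K w z n \<subseteq> kspan K (std_monos w z n a)" for n
    unfolding polys_deg_le_def
    by (rule kspan_subset[OF K finite_std_monos])
      (auto simp: monom2_def tot_deg_le_def intro!: monom_in_span_std_monos[OF K A(1) cK nz aA lead rel])
  have x12: "x1 \<in> rat_funs K w z" "x2 \<in> rat_funs K w z" using gen_field_subset_rat_funs[OF K] x1 x2 by auto
  obtain e p1 q1 p2 q2 where pq: "p1 \<in> polys_deg_le K w z e" "q1 \<in> polys_deg_le K w z e"
    "p2 \<in> polys_deg_le K w z e" "q2 \<in> polys_deg_le K w z e" "q1 \<noteq> 0" "q2 \<noteq> 0" "x1 = p1 / q1" "x2 = p2 / q2"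
    using rat_funs_common_degreeE[OF K x12] .
  define M where "M = 2 * (fst a + snd a) * (e + 1) + 1"
  define I where "I = {..M} \<times> {..M}"
  define f where "f ij = p1 ^ fst ij * q1 ^ (M - fst ij) * p2 ^ snd ij * q2 ^ (M - snd ij)" for ij
  have f_std: "f ij \<in> kspan K (std_monos w z (2 * M * e) a)" if "ij \<in> I" for ij
  proof -
    obtain i j where ij: "ij = (i, j)" "i \<le> M" "j \<le> M" using \<open>ij \<in> I\<close> unfolding I_def by auto
    have "f ij \<in> polys_deg_le K w z (i * e + (M - i) * e + j * e + (M - j) * e)"
      unfolding f_def ij(1) fst_conv snd_conv
      by (intro polys_deg_le_mult[OF K] polys_deg_le_power[OF K] pq)
    also have "i * e + (M - i) * e + j * e + (M - j) * e = 2 * M * e"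
      using ij by (simp flip: add_mult_distrib)
    finally show ?thesis using std by blast
  qed
  have "card (std_monos w z (2 * M * e) a) < card I"
    using card_std_monos_le[of w z "2 * M * e" a] std_count_lt_square[OF M_def]
    unfolding I_def by (simp add: card_cartesian_product)
  moreover have "finite I" unfolding I_def by simp
  ultimately obtain \<theta> where \<theta>K: "\<forall>ij\<in>I. \<theta> ij \<in> K" and \<theta>nz: "\<exists>ij\<in>I. \<theta> ij \<noteq> 0"
    and \<theta>rel: "(\<Sum>ij\<in>I. \<theta> ij * f ij) = 0"
    using kspan_dependent[OF K finite_std_monos] f_std by blast
  have "f ij = (q1 * q2) ^ M * monom2 x1 x2 ij" if "ij \<in> I" for ij
  proof -
    have "fst ij \<le> M" "snd ij \<le> M" using that unfolding I_def by auto
    then have "p1 ^ fst ij * q1 ^ (M - fst ij) = q1 ^ M * x1 ^ fst ij"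
      "p2 ^ snd ij * q2 ^ (M - snd ij) = q2 ^ M * x2 ^ snd ij"
      using power_frac_homogenize pq by auto
    then show ?thesis unfolding f_def monom2_def power_mult_distrib
      by (metis (no_types, lifting) mult.assoc mult.left_commute)
  qed
  then have "(q1 * q2) ^ M * (\<Sum>ij\<in>I. \<theta> ij * monom2 x1 x2 ij) = (\<Sum>ij\<in>I. \<theta> ij * f ij)"
    unfolding sum_distrib_left by (intro sum.cong) (auto simp: mult_ac)
  then have "(\<Sum>ij\<in>I. \<theta> ij * monom2 x1 x2 ij) = 0" using \<theta>rel pq by simp
  then show ?thesis unfolding alg_dependent_pair_def using \<open>finite I\<close> \<theta>K \<theta>nz by blast
qed

definition exp_pair :: "nat \<times> nat \<Rightarrow> nat \<Rightarrow> nat" where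
  "exp_pair ij = (\<lambda>k. if k = 0 then fst ij else if k = 1 then snd ij else 0)"

lemma mono_eval_exp_pair: "mono_eval (exp_pair ij) [w, z] = monom2 w z ij"
  by (simp add: mono_eval_def exp_pair_def monom2_def numeral_2_eq_2 lessThan_Suc)

lemma not_alg_dependent_pair_if_alg_indep:
  assumes ind: "alg_indep K [w, z]"
  shows "\<not> alg_dependent_pair K w z"
proof
  assume "alg_dependent_pair K w z"
  then obtain I c where I: "finite I" and cK: "\<forall>ij\<in>I. c ij \<in> K" and nz: "\<exists>ij\<in>I. c ij \<noteq> 0"
    and rel: "(\<Sum>ij\<in>I. c ij * monom2 w z ij) = 0"
    unfolding alg_dependent_pair_def by blast
  define c' where "c' \<alpha> = c (\<alpha> 0, \<alpha> 1)" for \<alpha> :: "nat \<Rightarrow> nat"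
  have c': "c' (exp_pair ij) = c ij" for ij unfolding c'_def exp_pair_def by simp
  have "inj exp_pair"
    by (rule inj_on_inverseI[where g = "\<lambda>\<alpha>. (\<alpha> 0, \<alpha> 1)"]) (simp add: exp_pair_def)
  then have "(\<Sum>\<alpha>\<in>exp_pair ` I. c' \<alpha> * mono_eval \<alpha> [w, z]) = (\<Sum>ij\<in>I. c ij * monom2 w z ij)"
    by (simp add: sum.reindex[OF inj_on_subset[OF _ subset_UNIV]] c' mono_eval_exp_pair)
  with rel have "(\<Sum>\<alpha>\<in>exp_pair ` I. c' \<alpha> * mono_eval \<alpha> [w, z]) = 0" by simp
  moreover have "finite (exp_pair ` I)" "\<forall>\<alpha>\<in>exp_pair ` I. \<forall>i\<ge>length [w, z]. \<alpha> i = 0"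
    "\<forall>\<alpha>\<in>exp_pair ` I. c' \<alpha> \<in> K"
    using I cK c' by (auto simp: exp_pair_def)
  ultimately have "\<forall>\<alpha>\<in>exp_pair ` I. c' \<alpha> = 0"
    using ind unfolding alg_indep_def by blast
  then show False using nz c' by auto
qed

lemma alg_indep_if_not_alg_dependent_pair:
  assumes indep: "\<not> alg_dependent_pair K w z"
  shows "alg_indep K [w, z]"
proof (rule ccontr)
  assume "\<not> alg_indep K [w, z]"
  then obtain A c where A: "finite A" and Az: "\<forall>\<alpha>\<in>A. \<forall>i\<ge>2. \<alpha> i = 0" and cK: "\<forall>\<alpha>\<in>A. c \<alpha> \<in> K"
    and rel: "(\<Sum>\<alpha>\<in>A. c \<alpha> * mono_eval \<alpha> [w, z]) = 0" and nz: "\<exists>\<alpha>\<in>A. c \<alpha> \<noteq> 0"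
    unfolding alg_indep_def by (auto simp: numeral_2_eq_2)
  define pr where "pr \<alpha> = (\<alpha> 0, \<alpha> (1::nat))" for \<alpha> :: "nat \<Rightarrow> nat"
  have exp_pr: "exp_pair (pr \<alpha>) = \<alpha>" if "\<alpha> \<in> A" for \<alpha>
    using Az that unfolding exp_pair_def pr_def by (auto simp: fun_eq_iff)
  then have "inj_on pr A" by (rule inj_on_inverseI)
  then have "(\<Sum>ij\<in>pr ` A. c (exp_pair ij) * monom2 w z ij) = (\<Sum>\<alpha>\<in>A. c \<alpha> * mono_eval \<alpha> [w, z])"
    by (simp add: sum.reindex exp_pr flip: mono_eval_exp_pair)
  moreover have "\<forall>ij\<in>pr ` A. c (exp_pair ij) \<in> K" "\<exists>ij\<in>pr ` A. c (exp_pair ij) \<noteq> 0"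
    using cK nz exp_pr by auto
  ultimately have "alg_dependent_pair K w z"
    unfolding alg_dependent_pair_def using A rel
    by (intro exI[of _ "pr ` A"] exI[of _ "\<lambda>ij. c (exp_pair ij)"] conjI) simp_all
  with indep show False ..
qed

lemma alg_indep_pair_iff: "alg_indep K [w, z] \<longleftrightarrow> \<not> alg_dependent_pair K w z"
  using not_alg_dependent_pair_if_alg_indep alg_indep_if_not_alg_dependent_pair by blast

lemma alg_dependent_pair_quadratic:
  assumes "c20 \<in> K" "c11 \<in> K" "c10 \<in> K" "c02 \<in> K" "c01 \<in> K" "c00 \<in> K"
    and "c20 \<noteq> 0 \<or> c11 \<noteq> 0 \<or> c10 \<noteq> 0 \<or> c02 \<noteq> 0 \<or> c01 \<noteq> 0"
    and "c20 * w ^ 2 + c11 * w * z + c10 * w + c02 * z ^ 2 + c01 * z + c00 = 0"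
  shows "alg_dependent_pair K w z"
proof -
  define A :: "(nat \<times> nat) set" where "A = {(2,0), (1,1), (1,0), (0,2), (0,1), (0,0)}"
  define c where "c ij = (if ij = (2,0) then c20 else if ij = (1,1) then c11 else if ij = (1,0) then c10
     else if ij = (0,2) then c02 else if ij = (0,1) then c01 else c00)" for ij :: "nat \<times> nat"
  have "(\<Sum>b\<in>A. c b * monom2 w z b) = c20 * w ^ 2 + c11 * w * z + c10 * w + c02 * z ^ 2 + c01 * z + c00"
    unfolding A_def c_def monom2_def by (simp add: algebra_simps)
  then show ?thesis
    unfolding alg_dependent_pair_def using assms
    by (intro exI[of _ A] exI[of _ c]) (auto simp: A_def c_def)
qed

definition has_indep_pair :: "'a::field set \<Rightarrow> 'a set \<Rightarrow> bool" where
  "has_indep_pair K L \<longleftrightarrow> (\<exists>x1\<in>L. \<exists>x2\<in>L. alg_indep K [x1, x2])"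

lemma has_indep_pair_if_has_trdeg: "has_trdeg K L 2 \<Longrightarrow> has_indep_pair K L"
  unfolding has_trdeg_def has_indep_pair_def numeral_2_eq_2
  by (fastforce simp: length_Suc_conv)

lemma alg_indep_if_has_indep_pair:
  assumes K: "subfield K" and "has_indep_pair K L" and "L \<subseteq> gen_field K {w, z}"
  shows "alg_indep K [w, z]"
proof -
  obtain x1 x2 where "x1 \<in> gen_field K {w, z}" "x2 \<in> gen_field K {w, z}" "alg_indep K [x1, x2]"
    using assms(2,3) unfolding has_indep_pair_def by blast
  then show ?thesis using alg_dependent_pair_gen_field[OF K] by (auto simp: alg_indep_pair_iff)
qed

lemma not_alg_dependent_pair_if_has_indep_pair:
  "subfield K \<Longrightarrow> has_indep_pair K (gen_field K S) \<Longrightarrow> S \<subseteq> gen_field K {w, z} \<Longrightarrow>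
    \<not> alg_dependent_pair K w z"
  using alg_indep_if_has_indep_pair gen_field_subset alg_indep_pair_iff by blast

lemma k_rational_if_has_indep_pair:
  assumes "subfield K" and "has_indep_pair K L" and "L = gen_field K {u, v}"
  shows "k_rational K L"
  unfolding k_rational_def
  using alg_indep_if_has_indep_pair[OF assms(1,2)] assms(3)
  by (intro exI[of _ "[u, v]"]) auto

section \<open>Isotropic vectors of quadratic forms over a C1 field\<close>

lemma finite_homog_monos: "finite (homog_monos n d)"
proof (rule finite_subset)
  show "homog_monos n d \<subseteq> {f. \<forall>x. (x \<in> {..<n} \<longrightarrow> f x \<in> {..d}) \<and> (x \<notin> {..<n} \<longrightarrow> f x = 0)}"
  proof
    fix \<alpha> assume "\<alpha> \<in> homog_monos n d"
    then have "\<forall>i\<ge>n. \<alpha> i = 0" and "sum \<alpha> {..<n} = d" unfolding homog_monos_def by auto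
    moreover have "\<alpha> i \<le> sum \<alpha> {..<n}" if "i < n" for i
      using member_le_sum[of i "{..<n}" \<alpha>] that by auto
    ultimately show "\<alpha> \<in> {f. \<forall>x. (x \<in> {..<n} \<longrightarrow> f x \<in> {..d}) \<and> (x \<notin> {..<n} \<longrightarrow> f x = 0)}"
      by auto
  qed
  show "finite {f. \<forall>x. (x \<in> {..<n} \<longrightarrow> f x \<in> {..d::nat}) \<and> (x \<notin> {..<n} \<longrightarrow> f x = 0)}"
    by (rule finite_set_of_finite_funs) auto
qed

lemma C1_fieldE:
  assumes "C1_field K" and "1 \<le> d" "d < n" and "\<forall>\<alpha>. c \<alpha> \<in> K"
    and S: "S \<subseteq> homog_monos n d" and "\<forall>\<alpha>. \<alpha> \<notin> S \<longrightarrow> c \<alpha> = 0"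
  obtains x where "\<forall>i<n. x i \<in> K" "\<exists>i<n. x i \<noteq> 0" "(\<Sum>\<alpha>\<in>S. c \<alpha> * (\<Prod>i<n. x i ^ \<alpha> i)) = 0"
proof -
  obtain x where x: "\<forall>i<n. x i \<in> K" "\<exists>i<n. x i \<noteq> 0"
    "(\<Sum>\<alpha>\<in>homog_monos n d. c \<alpha> * (\<Prod>i<n. x i ^ \<alpha> i)) = 0"
    using assms(1-4) unfolding C1_field_def by blast
  have "(\<Sum>\<alpha>\<in>S. c \<alpha> * (\<Prod>i<n. x i ^ \<alpha> i)) = (\<Sum>\<alpha>\<in>homog_monos n d. c \<alpha> * (\<Prod>i<n. x i ^ \<alpha> i))"
    by (rule sum.mono_neutral_left[OF finite_homog_monos S]) (use assms(6) in auto)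
  then show thesis using that x by auto
qed

definition exp_sq :: "nat \<Rightarrow> nat \<Rightarrow> nat" where
  "exp_sq i = (\<lambda>k. if k = i then 2 else 0)"

definition exp_mixed :: "nat \<Rightarrow> nat \<Rightarrow> nat \<Rightarrow> nat" where
  "exp_mixed i j = (\<lambda>k. if k = i \<or> k = j then 1 else 0)"

lemma exp_sq_homog: "i < n \<Longrightarrow> exp_sq i \<in> homog_monos n 2"
  unfolding homog_monos_def exp_sq_def by (auto simp: sum.delta)

lemma exp_mixed_homog:
  assumes "i < n" "j < n" "i \<noteq> j"
  shows "exp_mixed i j \<in> homog_monos n 2"
proof -
  have "sum (exp_mixed i j) {..<n} = sum (exp_mixed i j) {i, j}"
    by (rule sum.mono_neutral_right) (use assms in \<open>auto simp: exp_mixed_def\<close>)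
  then show ?thesis unfolding homog_monos_def using assms by (auto simp: exp_mixed_def)
qed

lemma prod_power_exp_sq:
  assumes "j < n"
  shows "(\<Prod>i<n. x i ^ exp_sq j i) = (x j ^ 2 :: 'a::comm_monoid_mult)"
proof -
  have "(\<Prod>i<n. x i ^ exp_sq j i) = (\<Prod>i<n. if i = j then x i ^ 2 else 1)"
    by (rule prod.cong) (auto simp: exp_sq_def)
  then show ?thesis using assms by simp
qed

lemma prod_power_exp_mixed:
  assumes "i < n" "j < n" "i \<noteq> j"
  shows "(\<Prod>k<n. x k ^ exp_mixed i j k) = (x i * x j :: 'a::comm_monoid_mult)"
proof -
  have "(\<Prod>k<n. x k ^ exp_mixed i j k) = (\<Prod>k\<in>{i, j}. x k ^ exp_mixed i j k)"
    by (rule prod.mono_neutral_right) (use assms in \<open>auto simp: exp_mixed_def\<close>)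
  then show ?thesis using assms by (simp add: exp_mixed_def)
qed

lemma exp_sq_eq_iff: "exp_sq i = exp_sq j \<longleftrightarrow> i = j"
  unfolding exp_sq_def by (metis num.distinct(1) numeral_eq_iff zero_neq_numeral)

lemma exp_mixed_neq_exp_sq: "i \<noteq> j \<Longrightarrow> exp_mixed i j \<noteq> exp_sq k"
  unfolding exp_sq_def exp_mixed_def by (metis one_neq_zero numeral_One numeral_eq_iff num.distinct(1))

lemma nonsquare_nonzero: "subfield K \<Longrightarrow> \<not> (\<exists>y\<in>K. a = y ^ 2) \<Longrightarrow> a \<noteq> 0"
  using subfield_zero by force

lemma norm_form_represents:
  assumes K: "subfield K" and C1: "C1_field K" and a: "a \<in> K" and nonsq: "\<not> (\<exists>y\<in>K. a = y ^ 2)"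
    and e: "e \<in> K" "e \<noteq> 0"
  obtains p q where "p \<in> K" "q \<in> K" "p ^ 2 - a * q ^ 2 = e"
proof -
  define c where "c \<alpha> = (if \<alpha> = exp_sq 0 then 1 else if \<alpha> = exp_sq 1 then - a
    else if \<alpha> = exp_sq 2 then - e else 0)" for \<alpha>
  obtain x where x: "\<forall>i<3. x i \<in> K" "\<exists>i<3. x i \<noteq> 0"
    "(\<Sum>\<alpha>\<in>{exp_sq 0, exp_sq 1, exp_sq 2}. c \<alpha> * (\<Prod>i<3. x i ^ \<alpha> i)) = 0"
  proof (rule C1_fieldE[OF C1, of 2 3 c])
    show "\<forall>\<alpha>. c \<alpha> \<in> K" using K a e by (auto simp: c_def subfield_zero subfield_one subfield_uminus)
    show "{exp_sq 0, exp_sq 1, exp_sq 2} \<subseteq> homog_monos 3 2" using exp_sq_homog by auto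
    show "\<forall>\<alpha>. \<alpha> \<notin> {exp_sq 0, exp_sq 1, exp_sq 2} \<longrightarrow> c \<alpha> = 0" by (auto simp: c_def)
  qed auto
  have "(\<Sum>\<alpha>\<in>{exp_sq 0, exp_sq 1, exp_sq 2}. c \<alpha> * (\<Prod>i<3. x i ^ \<alpha> i)) = x 0 ^ 2 - a * x 1 ^ 2 - e * x 2 ^ 2"
    by (simp add: c_def exp_sq_eq_iff prod_power_exp_sq)
  with x have eq: "x 0 ^ 2 - a * x 1 ^ 2 = e * x 2 ^ 2" by simp
  have "x 2 \<noteq> 0"
  proof
    assume x2: "x 2 = 0"
    have "x 1 \<noteq> 0"
    proof
      assume "x 1 = 0"
      with eq x2 have "x 0 = 0" by simp
      moreover obtain i where "i < 3" "x i \<noteq> 0" using x(2) by blast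
      then have "i = 0 \<or> i = 1 \<or> i = 2" by auto
      ultimately show False using x2 \<open>x 1 = 0\<close> \<open>x i \<noteq> 0\<close> by auto
    qed
    then have "a = (x 0 / x 1) ^ 2" using eq x2 by (simp add: power_divide)
    moreover have "x 0 / x 1 \<in> K" using x(1) K by (auto intro: subfield_divide)
    ultimately show False using nonsq by blast
  qed
  then have "(x 0 / x 2) ^ 2 - a * (x 1 / x 2) ^ 2 = e"
    using eq by (simp add: power_divide field_simps)
  moreover have "x 0 / x 2 \<in> K" "x 1 / x 2 \<in> K" using x(1) K by (auto intro: subfield_divide)
  ultimately show thesis using that by blast
qed

text \<open>The quadratic form v0^2 - a v1^2 - \<alpha> v2^2 - \<beta> v2 v3 - \<gamma> v3^2 of the projective closure of the
  surface x^2 - a y^2 = \<alpha> s^2 + \<beta> s + \<gamma>, and its polar bilinear form.\<close>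

definition quad_form :: "'a::field \<Rightarrow> 'a \<Rightarrow> 'a \<Rightarrow> 'a \<Rightarrow> (nat \<Rightarrow> 'a) \<Rightarrow> 'a" where
  "quad_form a \<alpha> \<beta> \<gamma> v = v 0 ^ 2 - a * v 1 ^ 2 - \<alpha> * v 2 ^ 2 - \<beta> * v 2 * v 3 - \<gamma> * v 3 ^ 2"

definition quad_polar :: "'a::field \<Rightarrow> 'a \<Rightarrow> 'a \<Rightarrow> 'a \<Rightarrow> (nat \<Rightarrow> 'a) \<Rightarrow> (nat \<Rightarrow> 'a) \<Rightarrow> 'a" where
  "quad_polar a \<alpha> \<beta> \<gamma> v w = 2 * v 0 * w 0 - 2 * a * v 1 * w 1 - 2 * \<alpha> * v 2 * w 2
     - \<beta> * (v 2 * w 3 + v 3 * w 2) - 2 * \<gamma> * v 3 * w 3"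

lemma quad_form_add_smult:
  "quad_form a \<alpha> \<beta> \<gamma> (\<lambda>i. v i + t * w i) =
    quad_form a \<alpha> \<beta> \<gamma> v + t * quad_polar a \<alpha> \<beta> \<gamma> v w + t ^ 2 * quad_form a \<alpha> \<beta> \<gamma> w"
  unfolding quad_form_def quad_polar_def by (simp add: algebra_simps power2_eq_square)

lemma quad_polar_diff_smult:
  "quad_polar a \<alpha> \<beta> \<gamma> (\<lambda>i. v i - t * w i) u = quad_polar a \<alpha> \<beta> \<gamma> v u - t * quad_polar a \<alpha> \<beta> \<gamma> w u"
  unfolding quad_polar_def by (simp add: algebra_simps)

lemma quad_polar_self: "quad_polar a \<alpha> \<beta> \<gamma> w w = 2 * quad_form a \<alpha> \<beta> \<gamma> w"
  unfolding quad_form_def quad_polar_def by (simp add: algebra_simps power2_eq_square)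

lemma quad_form_divide: "quad_form a \<alpha> \<beta> \<gamma> (\<lambda>i. v i / c) = quad_form a \<alpha> \<beta> \<gamma> v / c ^ 2"
  unfolding quad_form_def by (simp add: power_divide diff_divide_distrib mult.assoc) (simp add: power2_eq_square)

lemma quad_polar_divide: "quad_polar a \<alpha> \<beta> \<gamma> (\<lambda>i. v i / c) w = quad_polar a \<alpha> \<beta> \<gamma> v w / c"
  unfolding quad_polar_def by (cases "c = 0") (simp_all add: field_simps)

lemma quad_polar_zero: "\<forall>i<4. v i = 0 \<Longrightarrow> quad_polar a \<alpha> \<beta> \<gamma> v w = 0"
  unfolding quad_polar_def by simp

lemma quad_polar_commute: "quad_polar a \<alpha> \<beta> \<gamma> v w = quad_polar a \<alpha> \<beta> \<gamma> w v"
  unfolding quad_polar_def by (simp add: algebra_simps)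

lemma quad_form_in:
  "subfield F \<Longrightarrow> a \<in> F \<Longrightarrow> \<alpha> \<in> F \<Longrightarrow> \<beta> \<in> F \<Longrightarrow> \<gamma> \<in> F \<Longrightarrow> (\<And>i. i < 4 \<Longrightarrow> v i \<in> F) \<Longrightarrow>
    quad_form a \<alpha> \<beta> \<gamma> v \<in> F"
  unfolding quad_form_def by (intro subfield_closed; simp)+

lemma quad_polar_in:
  "subfield F \<Longrightarrow> a \<in> F \<Longrightarrow> \<alpha> \<in> F \<Longrightarrow> \<beta> \<in> F \<Longrightarrow> \<gamma> \<in> F \<Longrightarrow> (\<And>i. i < 4 \<Longrightarrow> v i \<in> F) \<Longrightarrow>
    (\<And>i. i < 4 \<Longrightarrow> w i \<in> F) \<Longrightarrow> quad_polar a \<alpha> \<beta> \<gamma> v w \<in> F"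
  unfolding quad_polar_def by (intro subfield_closed; simp add: subfield_numeral)+

lemma quad_form_isotropic:
  assumes K: "subfield K" and C1: "C1_field K" and coeffs: "a \<in> K" "\<alpha> \<in> K" "\<beta> \<in> K" "\<gamma> \<in> K"
  obtains v where "\<forall>i<4. v i \<in> K" "\<exists>i<4. v i \<noteq> 0" "quad_form a \<alpha> \<beta> \<gamma> v = 0"
proof -
  let ?S = "{exp_sq 0, exp_sq 1, exp_sq 2, exp_mixed 2 3, exp_sq 3}"
  define c where "c \<alpha>' = (if \<alpha>' = exp_sq 0 then 1 else if \<alpha>' = exp_sq 1 then - a
    else if \<alpha>' = exp_sq 2 then - \<alpha> else if \<alpha>' = exp_mixed 2 3 then - \<beta>
    else if \<alpha>' = exp_sq 3 then - \<gamma> else 0)" for \<alpha>'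
  obtain v where v: "\<forall>i<4. v i \<in> K" "\<exists>i<4. v i \<noteq> 0"
    "(\<Sum>\<alpha>'\<in>?S. c \<alpha>' * (\<Prod>i<4. v i ^ \<alpha>' i)) = 0"
  proof (rule C1_fieldE[OF C1, of 2 4 c ?S])
    show "\<forall>\<alpha>'. c \<alpha>' \<in> K" using K coeffs by (auto simp: c_def subfield_zero subfield_one subfield_uminus)
    show "?S \<subseteq> homog_monos 4 2" using exp_sq_homog exp_mixed_homog by auto
    show "\<forall>\<alpha>'. \<alpha>' \<notin> ?S \<longrightarrow> c \<alpha>' = 0" by (auto simp: c_def)
  qed auto
  have "(\<Sum>\<alpha>'\<in>?S. c \<alpha>' * (\<Prod>i<4. v i ^ \<alpha>' i)) = quad_form a \<alpha> \<beta> \<gamma> v"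
    by (simp add: c_def exp_sq_eq_iff exp_mixed_neq_exp_sq exp_mixed_neq_exp_sq[symmetric]
        prod_power_exp_sq prod_power_exp_mixed quad_form_def algebra_simps)
  then show thesis using that v by auto
qed

section \<open>Conics and the projection from a point of a quadric\<close>

lemma conic_slope_param:
  fixes a p q e X Y :: "'a::field"
  assumes two: "(2::'a) \<noteq> 0" and pq: "p ^ 2 - a * q ^ 2 = e" and e: "e \<noteq> 0"
    and XY: "X ^ 2 - a * Y ^ 2 = e" and Xp: "X \<noteq> p"
  defines "\<sigma> \<equiv> (Y - q) / (X - p)"
  shows "1 - a * \<sigma> ^ 2 \<noteq> 0" and "X = p + (2 * a * q * \<sigma> - 2 * p) / (1 - a * \<sigma> ^ 2)"
    and "Y = q + \<sigma> * (X - p)"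
proof -
  define r where "r = X - p"
  have r0: "r \<noteq> 0" using Xp unfolding r_def by simp
  have Y: "Y = q + \<sigma> * r" unfolding \<sigma>_def r_def using Xp by simp
  have "(p + r) ^ 2 - a * (q + \<sigma> * r) ^ 2 = p ^ 2 - a * q ^ 2" using XY pq Y by (simp add: r_def)
  then have "r * (r * (1 - a * \<sigma> ^ 2) - (2 * a * q * \<sigma> - 2 * p)) = 0"
    by (simp add: power2_eq_square algebra_simps)
  then have key: "r * (1 - a * \<sigma> ^ 2) = 2 * a * q * \<sigma> - 2 * p" using r0 by simp
  show h: "1 - a * \<sigma> ^ 2 \<noteq> 0"
  proof
    assume h0: "1 - a * \<sigma> ^ 2 = 0"
    with key two have "a * q * \<sigma> = p" by (simp add: mult.assoc)
    with h0 have "q = p * \<sigma>" by (metis mult.assoc mult.commute mult.right_neutral power2_eq_square eq_iff_diff_eq_0)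
    then have "e = p ^ 2 * (1 - a * \<sigma> ^ 2)" using pq by (simp add: algebra_simps power2_eq_square)
    then show False using h0 e by simp
  qed
  show "X = p + (2 * a * q * \<sigma> - 2 * p) / (1 - a * \<sigma> ^ 2)"
    using key h by (simp add: field_simps r_def)
  show "Y = q + \<sigma> * (X - p)" using Y unfolding r_def .
qed

lemma norm_form_eq_first_coord:
  assumes K: "subfield K" and "a \<noteq> 0" and "q \<in> K" and "p ^ 2 - a * q ^ 2 = p ^ 2 - a * Y ^ 2"
  shows "Y \<in> K"
proof -
  from assms(2,4) have "Y ^ 2 = q ^ 2" by simp
  then have "Y = q \<or> Y = - q" by (simp add: power2_eq_iff)
  then show ?thesis using assms(3) subfield_uminus[OF K] by auto
qed

text \<open>A conic with constant coefficients over K(s) has a K-point, so its function field over K(s)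
  is K(s, \<sigma>) for the slope \<sigma> of the line through that point.\<close>

lemma k_rational_conic_bundle:
  fixes a \<kappa> s X Y :: "'a::field"
  assumes K: "subfield K" and C1: "C1_field K" and a: "a \<in> K" and nonsq: "\<not> (\<exists>y\<in>K. a = y ^ 2)"
    and two: "(2::'a) \<noteq> 0" and \<kappa>: "\<kappa> \<in> K" "\<kappa> \<noteq> 0" and XY: "X ^ 2 - a * Y ^ 2 = \<kappa>"
    and pair: "has_indep_pair K (gen_field K {s, X, Y})"
  shows "k_rational K (gen_field K {s, X, Y})"
proof -
  obtain p q where p: "p \<in> K" and q: "q \<in> K" and pq: "p ^ 2 - a * q ^ 2 = \<kappa>"
    using norm_form_represents[OF K C1 a nonsq \<kappa>] .
  have "X \<noteq> p"
  proof
    assume "X = p"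
    with pq XY have "p ^ 2 - a * q ^ 2 = p ^ 2 - a * Y ^ 2" by simp
    then have "Y \<in> K" by (rule norm_form_eq_first_coord[OF K nonsquare_nonzero[OF K nonsq] q])
    then have "{s, X, Y} \<subseteq> gen_field K {X, s}" by (auto intro: gen_field_base gen_field_gen)
    moreover have "alg_dependent_pair K X s"
      by (rule alg_dependent_pair_quadratic[of 0 K 0 1 0 0 "- p"])
        (use K p \<open>X = p\<close> in \<open>auto simp: subfield_zero subfield_one subfield_uminus\<close>)
    ultimately show False using not_alg_dependent_pair_if_has_indep_pair[OF K pair] by blast
  qed
  define \<sigma> where "\<sigma> = (Y - q) / (X - p)"
  note param = conic_slope_param[OF two pq \<kappa>(2) XY \<open>X \<noteq> p\<close>, folded \<sigma>_def]
  have "gen_field K {s, X, Y} = gen_field K {s, \<sigma>}"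
  proof (rule gen_field_eqI)
    have base: "s \<in> gen_field K {s, \<sigma>}" "\<sigma> \<in> gen_field K {s, \<sigma>}" "a \<in> gen_field K {s, \<sigma>}"
      "p \<in> gen_field K {s, \<sigma>}" "q \<in> gen_field K {s, \<sigma>}"
      using a p q by (auto intro: gen_field_base gen_field_gen)
    then have "X \<in> gen_field K {s, \<sigma>}"
      by (subst param(2)) (intro gen_field_closed gen_field_one gen_field_numeral)
    then have "Y \<in> gen_field K {s, \<sigma>}"
      using base by (subst param(3)) (intro gen_field_closed)
    then show "{s, X, Y} \<subseteq> gen_field K {s, \<sigma>}" using base \<open>X \<in> _\<close> by auto
    have "X \<in> gen_field K {s, X, Y}" "Y \<in> gen_field K {s, X, Y}" "p \<in> gen_field K {s, X, Y}"
      "q \<in> gen_field K {s, X, Y}"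
      using p q by (auto intro: gen_field_base gen_field_gen)
    then have "\<sigma> \<in> gen_field K {s, X, Y}" unfolding \<sigma>_def by (intro gen_field_closed)
    then show "{s, \<sigma>} \<subseteq> gen_field K {s, X, Y}" by (auto intro: gen_field_gen)
  qed
  then show ?thesis using k_rational_if_has_indep_pair[OF K pair] by blast
qed

text \<open>For X and P on the quadric with B(X, P) \<noteq> 0, X is recovered from any point (X - \<tau> P) / c
  of the line through P and X as the second intersection of that line with the quadric.\<close>

lemma quadric_second_intersection:
  fixes X P :: "nat \<Rightarrow> 'a::field" and \<tau> c :: 'a
  assumes QX: "quad_form a \<alpha> \<beta> \<gamma> X = 0" and QP: "quad_form a \<alpha> \<beta> \<gamma> P = 0"
    and BXP: "quad_polar a \<alpha> \<beta> \<gamma> X P \<noteq> 0" and c: "c \<noteq> 0"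
  defines "\<rho> \<equiv> \<lambda>i. (X i - \<tau> * P i) / c"
  shows "X i = c * (\<rho> i - quad_form a \<alpha> \<beta> \<gamma> \<rho> / quad_polar a \<alpha> \<beta> \<gamma> \<rho> P * P i)"
proof -
  let ?Q = "quad_form a \<alpha> \<beta> \<gamma>" and ?B = "quad_polar a \<alpha> \<beta> \<gamma>"
  define \<pi> where "\<pi> i = X i - \<tau> * P i" for i
  have \<rho>: "\<rho> = (\<lambda>i. \<pi> i / c)" unfolding \<rho>_def \<pi>_def ..
  have B\<pi>: "?B \<pi> P = ?B X P"
    unfolding \<pi>_def by (simp add: quad_polar_diff_smult quad_polar_self QP)
  have "?Q X = ?Q \<pi> + \<tau> * ?B \<pi> P + \<tau> ^ 2 * ?Q P"
    using quad_form_add_smult[of a \<alpha> \<beta> \<gamma> \<pi> \<tau> P] by (simp add: \<pi>_def)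
  then have Q\<pi>: "?Q \<pi> = - \<tau> * ?B X P" using QX QP B\<pi> by (simp add: eq_neg_iff_add_eq_0)
  have ratio: "?Q \<rho> / ?B \<rho> P = - \<tau> / c"
    unfolding \<rho> quad_form_divide quad_polar_divide Q\<pi> B\<pi> using BXP c
    by (simp add: field_simps power2_eq_square)
  show ?thesis unfolding ratio using c by (simp add: \<rho>_def field_simps)
qed

lemma lessThan_4_remove_two:
  assumes "k < 4" "j < (4::nat)" "k \<noteq> j"
  obtains j1 j2 where "{..<4} - {k, j} = {j1, j2}" "j1 < 4" "j2 < 4"
proof -
  have "card ({..<4::nat} - {k, j}) = 2" using assms by (simp add: card_Diff_subset)
  then obtain j1 j2 where j12: "{..<4} - {k, j} = {j1, j2}" by (auto simp: card_2_iff)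
  moreover have "j1 < 4" "j2 < 4"
    using j12 unfolding set_eq_iff by (metis Diff_iff insertCI lessThan_iff)+
  ultimately show thesis using that by blast
qed

lemma k_rational_quadric_projection:
  fixes X P :: "nat \<Rightarrow> 'a::field"
  assumes K: "subfield K" and coeffs: "a \<in> K" "\<alpha> \<in> K" "\<beta> \<in> K" "\<gamma> \<in> K"
    and P: "\<forall>i<4. P i \<in> K" "quad_form a \<alpha> \<beta> \<gamma> P = 0"
    and X: "quad_form a \<alpha> \<beta> \<gamma> X = 0" "X 3 = 1"
    and not_tangent: "quad_polar a \<alpha> \<beta> \<gamma> X P \<noteq> 0"
    and pair: "has_indep_pair K (gen_field K {X 0, X 1, X 2})"
  shows "k_rational K (gen_field K {X 0, X 1, X 2})"
proof -
  let ?Q = "quad_form a \<alpha> \<beta> \<gamma>" and ?B = "quad_polar a \<alpha> \<beta> \<gamma>"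
  let ?L = "gen_field K {X 0, X 1, X 2}"
  obtain k where k: "k < 4" "P k \<noteq> 0"
    using not_tangent quad_polar_zero[of P a \<alpha> \<beta> \<gamma> X] quad_polar_commute[of a \<alpha> \<beta> \<gamma> X P] by auto
  define \<tau> where "\<tau> = X k / P k"
  define \<pi> where "\<pi> i = X i - \<tau> * P i" for i
  have "\<pi> k = 0" unfolding \<pi>_def \<tau>_def using k by simp
  have "?B \<pi> P = ?B X P"
    unfolding \<pi>_def by (simp add: quad_polar_diff_smult quad_polar_self P(2))
  then obtain j where j: "j < 4" "\<pi> j \<noteq> 0"
    using quad_polar_zero[of \<pi>] not_tangent by force
  define \<rho> where "\<rho> i = \<pi> i / \<pi> j" for i
  define W where "W i = \<rho> i - ?Q \<rho> / ?B \<rho> P * P i" for i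
  have XW0: "X i = \<pi> j * W i" for i
    using quadric_second_intersection[OF X(1) P(2) not_tangent j(2), where \<tau> = \<tau>]
    unfolding W_def \<rho>_def \<pi>_def .
  have XW: "X i = W i / W 3" for i
  proof -
    have "W i / W 3 = (\<pi> j * W i) / (\<pi> j * W 3)" using j(2) by simp
    also have "\<dots> = X i" using XW0[of i] XW0[of 3] X(2) by simp
    finally show ?thesis by simp
  qed
  have "k \<noteq> j" using \<open>\<pi> k = 0\<close> j(2) by auto
  then obtain j1 j2 where j12: "{..<4} - {k, j} = {j1, j2}" "j1 < 4" "j2 < 4"
    using lessThan_4_remove_two k(1) j(1) by blast
  let ?H = "gen_field K {\<rho> j1, \<rho> j2}"
  have \<rho>H: "\<rho> i \<in> ?H" if "i < 4" for i
  proof -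
    have "i = k \<or> i = j \<or> i = j1 \<or> i = j2" using j12(1) that by blast
    then show ?thesis unfolding \<rho>_def using \<open>\<pi> k = 0\<close> j(2)
      by (auto intro: gen_field_gen subfield_zero[OF subfield_gen_field] gen_field_one)
  qed
  have "P i \<in> ?H" if "i < 4" for i using P(1) that by (auto intro: gen_field_base)
  then have "W i \<in> ?H" if "i < 4" for i
    unfolding W_def using \<rho>H coeffs that
    by (intro gen_field_closed quad_form_in quad_polar_in subfield_gen_field) (auto intro: gen_field_base)
  then have XH: "X i \<in> ?H" if "i < 4" for i unfolding XW using that by (intro gen_field_closed) auto
  have XL: "X i \<in> ?L" if "i < 4" for i
  proof -
    have "i = 0 \<or> i = 1 \<or> i = 2 \<or> i = 3" using that by auto
    then show ?thesis by (elim disjE) (auto intro: gen_field_gen simp: X(2) gen_field_one)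
  qed
  then have \<pi>L: "\<pi> i \<in> ?L" if "i < 4" for i
    unfolding \<pi>_def \<tau>_def using that k P(1) by (intro gen_field_closed) (auto intro: gen_field_base)
  have "\<rho> j1 \<in> ?L" "\<rho> j2 \<in> ?L" unfolding \<rho>_def using \<pi>L j(1) j12(2,3) by (auto intro: gen_field_closed)
  then have "?L = ?H" using XH by (intro gen_field_eqI) auto
  then show ?thesis using k_rational_if_has_indep_pair[OF K pair] by blast
qed

section \<open>The quadric surface x^2 - a y^2 = \<alpha> s^2 + \<beta> s + \<gamma>\<close>

lemma binary_quadratic_degenerate:
  fixes \<alpha> \<beta> \<gamma> s0 z0 :: "'a::field"
  assumes K: "subfield K" and "\<alpha> \<in> K" "\<gamma> \<in> K" "s0 \<in> K" "z0 \<in> K" and two: "(2::'a) \<noteq> 0"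
    and radical: "2 * \<alpha> * s0 + \<beta> * z0 = 0" "\<beta> * s0 + 2 * \<gamma> * z0 = 0" and nz: "s0 \<noteq> 0 \<or> z0 \<noteq> 0"
  obtains \<mu> where "\<mu> \<in> K" "\<alpha> = \<mu> * z0 ^ 2" "\<beta> = - 2 * \<mu> * z0 * s0" "\<gamma> = \<mu> * s0 ^ 2"
proof (cases "z0 = 0")
  case True
  with nz radical two have "\<alpha> = 0" "\<beta> = 0" by auto
  moreover have "\<gamma> / s0 ^ 2 \<in> K" using assms by (intro subfield_closed) auto
  ultimately show thesis using that[of "\<gamma> / s0 ^ 2"] True nz by simp
next
  case False
  have "\<beta> * z0 = - 2 * \<alpha> * s0" using radical(1) by algebra
  then have \<beta>: "\<beta> = - 2 * (\<alpha> / z0 ^ 2) * z0 * s0" using False by (simp add: field_simps power2_eq_square)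
  have "2 * (\<gamma> * z0 ^ 2 - \<alpha> * s0 ^ 2) = 0" using radical by algebra
  then have \<gamma>: "\<gamma> = \<alpha> / z0 ^ 2 * s0 ^ 2" using False two by (simp add: field_simps)
  have "\<alpha> / z0 ^ 2 \<in> K" using assms by (intro subfield_closed) auto
  then show thesis using that[of "\<alpha> / z0 ^ 2"] \<beta> \<gamma> False by simp
qed

locale norm_quadric_surface =
  fixes K :: "'a::field set" and a \<alpha> \<beta> \<gamma> x y s :: 'a
  assumes K: "subfield K" and C1: "C1_field K" and two: "(2::'a) \<noteq> 0"
    and a: "a \<in> K" and nonsquare: "\<not> (\<exists>y\<in>K. a = y ^ 2)"
    and coeffs: "\<alpha> \<in> K" "\<beta> \<in> K" "\<gamma> \<in> K" and coeffs_nonzero: "\<alpha> \<noteq> 0 \<or> \<beta> \<noteq> 0 \<or> \<gamma> \<noteq> 0"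
    and surface: "x ^ 2 - a * y ^ 2 = \<alpha> * s ^ 2 + \<beta> * s + \<gamma>"
    and pair: "has_indep_pair K (gen_field K {x, y, s})"
begin

lemma a_nonzero: "a \<noteq> 0"
  using nonsquare_nonzero[OF K nonsquare] .

lemma no_relation: "{x, y, s} \<subseteq> gen_field K {w, z} \<Longrightarrow> \<not> alg_dependent_pair K w z"
  by (rule not_alg_dependent_pair_if_has_indep_pair[OF K pair])

lemma s_notin_K: "s \<notin> K"
proof
  assume "s \<in> K"
  then have g: "\<alpha> * s ^ 2 + \<beta> * s + \<gamma> \<in> K" using K coeffs by (intro subfield_closed) auto
  have rel: "1 * x ^ 2 + 0 * x * y + 0 * x + (- a) * y ^ 2 + 0 * y + (- (\<alpha> * s ^ 2 + \<beta> * s + \<gamma>)) = 0"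
    using surface by algebra
  have "alg_dependent_pair K x y"
    by (rule alg_dependent_pair_quadratic[OF subfield_one[OF K] subfield_zero[OF K] subfield_zero[OF K]
          subfield_uminus[OF K a] subfield_zero[OF K] subfield_uminus[OF K g] _ rel]) simp
  moreover have "{x, y, s} \<subseteq> gen_field K {x, y}"
    using \<open>s \<in> K\<close> by (auto intro: gen_field_base gen_field_gen)
  ultimately show False using no_relation by blast
qed

lemma x_not_linear:
  assumes l: "l1 \<in> K" "l2 \<in> K" "l3 \<in> K"
  shows "x \<noteq> l1 * y + l2 * s + l3"
proof
  assume x: "x = l1 * y + l2 * s + l3"
  have rel: "(l1 ^ 2 - a) * y ^ 2 + (2 * l1 * l2) * y * s + (2 * l1 * l3) * y + (l2 ^ 2 - \<alpha>) * s ^ 2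
      + (2 * l2 * l3 - \<beta>) * s + (l3 ^ 2 - \<gamma>) = 0"
    using surface unfolding x by algebra
  moreover have "l1 ^ 2 - a \<noteq> 0" using nonsquare l(1) by auto
  ultimately have "alg_dependent_pair K y s"
    using K a coeffs l by (intro alg_dependent_pair_quadratic[OF _ _ _ _ _ _ _ rel]) (auto intro!: subfield_closed simp: subfield_numeral)
  moreover have "x \<in> gen_field K {y, s}"
    unfolding x using l by (intro gen_field_closed) (auto intro: gen_field_base gen_field_gen)
  then have "{x, y, s} \<subseteq> gen_field K {y, s}" by (auto intro: gen_field_gen)
  ultimately show False using no_relation by blast
qed

lemma y_not_linear:
  assumes m: "m2 \<in> K" "m3 \<in> K"
  shows "y \<noteq> m2 * s + m3"
proof
  assume y: "y = m2 * s + m3"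
  have rel: "1 * x ^ 2 + 0 * x * s + 0 * x + (- a * m2 ^ 2 - \<alpha>) * s ^ 2 + (- 2 * a * m2 * m3 - \<beta>) * s
      + (- a * m3 ^ 2 - \<gamma>) = 0"
    using surface unfolding y by algebra
  then have "alg_dependent_pair K x s"
    using K a coeffs m
    by (intro alg_dependent_pair_quadratic[OF _ _ _ _ _ _ _ rel]) (auto intro!: subfield_closed simp: subfield_numeral subfield_zero subfield_one)
  moreover have "y \<in> gen_field K {x, s}"
    unfolding y using m by (intro gen_field_closed) (auto intro: gen_field_base gen_field_gen)
  then have "{x, y, s} \<subseteq> gen_field K {x, s}" by (auto intro: gen_field_gen)
  ultimately show False using no_relation by blast
qed

text \<open>With lin = z0 s - s0, the point (x / lin, y / lin) lies on the conic X^2 - a Y^2 = \<mu> with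
  constant coefficients.\<close>

lemma k_rational_if_rhs_square:
  assumes \<mu>: "\<mu> \<in> K" "\<mu> \<noteq> 0" and P: "s0 \<in> K" "z0 \<in> K" "s0 \<noteq> 0 \<or> z0 \<noteq> 0"
    and rhs: "x ^ 2 - a * y ^ 2 = \<mu> * (z0 * s - s0) ^ 2"
  shows "k_rational K (gen_field K {x, y, s})"
proof -
  define lin where "lin = z0 * s - s0"
  have "lin \<noteq> 0"
  proof
    assume "lin = 0"
    then have "z0 \<noteq> 0" using P(3) by (auto simp: lin_def)
    with \<open>lin = 0\<close> have "s = s0 / z0" by (simp add: lin_def field_simps)
    then show False using s_notin_K subfield_divide[OF K P(1,2)] by simp
  qed
  have "(x / lin) ^ 2 - a * (y / lin) ^ 2 = \<mu>"
    using rhs \<open>lin \<noteq> 0\<close> unfolding lin_def[symmetric] by (simp add: power_divide field_simps)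
  moreover have "gen_field K {x, y, s} = gen_field K {s, x / lin, y / lin}"
  proof (rule gen_field_eqI)
    have "lin \<in> gen_field K {x, y, s}" "lin \<in> gen_field K {s, x / lin, y / lin}"
      unfolding lin_def using P by (auto intro!: gen_field_closed intro: gen_field_base gen_field_gen)
    then show "{s, x / lin, y / lin} \<subseteq> gen_field K {x, y, s}"
      by (auto intro!: gen_field_closed intro: gen_field_gen)
    have "x / lin * lin \<in> gen_field K {s, x / lin, y / lin}" "y / lin * lin \<in> gen_field K {s, x / lin, y / lin}"
      by (rule gen_field_closed(3)[OF gen_field_gen \<open>lin \<in> gen_field K {s, x / lin, y / lin}\<close>], simp)+
    then show "{x, y, s} \<subseteq> gen_field K {s, x / lin, y / lin}"
      using \<open>lin \<noteq> 0\<close> by (auto intro: gen_field_gen)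
  qed
  ultimately show ?thesis
    using k_rational_conic_bundle[OF K C1 a nonsquare two \<mu>] pair by simp
qed

lemma k_rational_if_affine_in_s:
  assumes P: "s0 \<in> K" "z0 \<in> K" "s0 \<noteq> 0 \<or> z0 \<noteq> 0"
    and rel: "(2 * \<alpha> * s0 + \<beta> * z0) * s + (\<beta> * s0 + 2 * \<gamma> * z0) = 0"
  shows "k_rational K (gen_field K {x, y, s})"
proof (cases "2 * \<alpha> * s0 + \<beta> * z0 = 0")
  case False
  then have "s = - (\<beta> * s0 + 2 * \<gamma> * z0) / (2 * \<alpha> * s0 + \<beta> * z0)"
    using rel by (simp add: field_simps) algebra
  moreover have "- (\<beta> * s0 + 2 * \<gamma> * z0) / (2 * \<alpha> * s0 + \<beta> * z0) \<in> K"
    using K coeffs P by (auto intro!: subfield_closed simp: subfield_numeral)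
  ultimately show ?thesis using s_notin_K by simp
next
  case True
  with rel have "\<beta> * s0 + 2 * \<gamma> * z0 = 0" by simp
  then obtain \<mu> where \<mu>: "\<mu> \<in> K" "\<alpha> = \<mu> * z0 ^ 2" "\<beta> = - 2 * \<mu> * z0 * s0" "\<gamma> = \<mu> * s0 ^ 2"
    using binary_quadratic_degenerate[OF K coeffs(1,3) P(1,2) two True] P(3) by blast
  then have "\<mu> \<noteq> 0" using coeffs_nonzero by auto
  have "x ^ 2 - a * y ^ 2 = \<mu> * (z0 * s - s0) ^ 2"
    unfolding surface \<mu>(2-4) by (simp add: power2_eq_square algebra_simps)
  then show ?thesis using k_rational_if_rhs_square[OF \<mu>(1) \<open>\<mu> \<noteq> 0\<close> P] by blast
qed

text \<open>At a point P of the projective quadric, the tangent plane through the generic point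
  (x, y, s, 1) is a linear relation among x, y, s. It either expresses one of them through the
  others, which yields an algebraic relation between the remaining two, or it forces the
  right-hand side to be a constant multiple of a square.\<close>

lemma k_rational_if_tangent:
  fixes P :: "nat \<Rightarrow> 'a"
  assumes P: "\<forall>i<4. P i \<in> K" "\<exists>i<4. P i \<noteq> 0"
    and tangent: "2 * x * P 0 - 2 * a * y * P 1 - 2 * \<alpha> * s * P 2 - \<beta> * (s * P 3 + P 2) - 2 * \<gamma> * P 3 = 0"
  shows "k_rational K (gen_field K {x, y, s})"
proof -
  define L2 where "L2 = 2 * \<alpha> * P 2 + \<beta> * P 3"
  define L3 where "L3 = \<beta> * P 2 + 2 * \<gamma> * P 3"
  have PK: "P 0 \<in> K" "P 1 \<in> K" "P 2 \<in> K" "P 3 \<in> K" using P(1) by auto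
  have L: "L2 \<in> K" "L3 \<in> K"
    unfolding L2_def L3_def using K coeffs PK by (auto intro!: subfield_closed simp: subfield_numeral)
  have lin: "x * (2 * P 0) = 2 * a * P 1 * y + L2 * s + L3" unfolding L2_def L3_def using tangent by algebra
  consider "P 0 \<noteq> 0" | "P 0 = 0" "P 1 \<noteq> 0" | "P 0 = 0" "P 1 = 0" by blast
  then show ?thesis
  proof cases
    case 1
    then have "x = (a * P 1 / P 0) * y + (L2 / (2 * P 0)) * s + L3 / (2 * P 0)"
      using lin two by (simp add: field_simps)
    moreover have "a * P 1 / P 0 \<in> K" "L2 / (2 * P 0) \<in> K" "L3 / (2 * P 0) \<in> K"
      using K a PK L by (auto intro!: subfield_closed simp: subfield_numeral)
    ultimately show ?thesis using x_not_linear by blast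
  next
    case 2
    have "y * (2 * a * P 1) = - L2 * s - L3" using lin \<open>P 0 = 0\<close> by algebra
    then have "y = (- L2 / (2 * a * P 1)) * s + (- L3 / (2 * a * P 1))"
      using \<open>P 1 \<noteq> 0\<close> two a_nonzero by (simp add: field_simps) algebra
    moreover have "- L2 / (2 * a * P 1) \<in> K" "- L3 / (2 * a * P 1) \<in> K"
      using K a PK L by (auto intro!: subfield_closed simp: subfield_numeral)
    ultimately show ?thesis using y_not_linear by blast
  next
    case 3
    then have "L2 * s + L3 = 0" using lin by simp
    moreover have "P 2 \<noteq> 0 \<or> P 3 \<noteq> 0"
    proof (rule ccontr)
      assume "\<not> (P 2 \<noteq> 0 \<or> P 3 \<noteq> 0)"
      then have "\<forall>i<4. P i = 0" using 3 by (auto simp: less_Suc_eq numeral_eq_Suc)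
      then show False using P(2) by blast
    qed
    ultimately show ?thesis using k_rational_if_affine_in_s[OF PK(3,4)] unfolding L2_def L3_def by blast
  qed
qed

theorem k_rational: "k_rational K (gen_field K {x, y, s})"
proof -
  obtain P where P: "\<forall>i<4. P i \<in> K" "\<exists>i<4. P i \<noteq> 0" "quad_form a \<alpha> \<beta> \<gamma> P = 0"
    using quad_form_isotropic[OF K C1 a coeffs] .
  define X where "X i = (if i = 0 then x else if i = 1 then y else if i = 2 then s else 1)" for i :: nat
  have X: "quad_form a \<alpha> \<beta> \<gamma> X = 0" "X 3 = 1" "{X 0, X 1, X 2} = {x, y, s}"
    unfolding X_def quad_form_def using surface by (auto simp: algebra_simps)
  show ?thesis
  proof (cases "quad_polar a \<alpha> \<beta> \<gamma> X P = 0")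
    case True
    then show ?thesis by (intro k_rational_if_tangent[OF P(1,2)]) (simp add: X_def quad_polar_def)
  next
    case False
    then show ?thesis
      using k_rational_quadric_projection[OF K a coeffs P(1,3) X(1,2) False] pair X(3) by simp
  qed
qed

end

section \<open>Reduction of the two norm equations to a quadric surface\<close>

lemma twisted_coeffs_nonzero:
  fixes a b c d p q :: "'a::field"
  assumes two: "(2::'a) \<noteq> 0" and "a \<noteq> 0" "b \<noteq> 0" and cd: "c \<noteq> 0 \<or> d \<noteq> 0"
    and pq: "p ^ 2 - a * q ^ 2 = b"
  shows "- a * (2 * c * p + d) \<noteq> 0 \<or> 4 * a * c * q \<noteq> 0 \<or> d - 2 * c * p \<noteq> 0"
proof (rule ccontr)
  assume "\<not> ?thesis"
  then have h1: "2 * c * p + d = 0" and h2: "d = 2 * c * p" and h3: "4 * a * c * q = 0"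
    using \<open>a \<noteq> 0\<close> by auto
  have "2 * (2 * (c * p)) = 0" using h1 h2 by algebra
  then have "c * p = 0" using two by (metis mult_eq_0_iff)
  then have "d = 0" using h2 by simp
  then have "c \<noteq> 0" using cd by simp
  with \<open>c * p = 0\<close> have "p = 0" by simp
  have "2 * (2 * (a * c * q)) = 0" using h3 by algebra
  then have "q = 0" using two \<open>a \<noteq> 0\<close> \<open>c \<noteq> 0\<close> by (metis mult_eq_0_iff)
  then show False using pq \<open>p = 0\<close> \<open>b \<noteq> 0\<close> by simp
qed

lemma gen_field_norm_twist:
  assumes h: "1 - a * s ^ 2 \<noteq> 0" and a: "a \<in> K"
    and t12: "t1 \<in> gen_field K {s}" "t2 \<in> gen_field K {s}" and s: "s \<in> gen_field K {t1, t2}"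
  shows "gen_field K {t1, t2, t3, t4} = gen_field K {t3 + a * s * t4, t4 + s * t3, s}"
proof -
  define u v where "u = t3 + a * s * t4" and "v = t4 + s * t3"
  let ?G = "gen_field K {u, v, s}" and ?L = "gen_field K {t1, t2, t3, t4}"
  have "{t1, t2, t3, t4} \<subseteq> ?G"
  proof -
    have base: "u \<in> ?G" "v \<in> ?G" "s \<in> ?G" "a \<in> ?G"
      using a by (auto intro: gen_field_gen gen_field_base)
    have "t3 = (u - a * s * v) / (1 - a * s ^ 2)" "t4 = (v - s * u) / (1 - a * s ^ 2)"
      using h unfolding u_def v_def by (simp_all add: field_simps power2_eq_square)
    moreover have "(u - a * s * v) / (1 - a * s ^ 2) \<in> ?G" "(v - s * u) / (1 - a * s ^ 2) \<in> ?G"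
      by (intro gen_field_closed gen_field_one base)+
    ultimately have "t3 \<in> ?G" "t4 \<in> ?G" by simp_all
    moreover have "t1 \<in> ?G" "t2 \<in> ?G"
      using t12 gen_field_subset[of "{s}" K "{u, v, s}"] base(3) by auto
    ultimately show ?thesis by auto
  qed
  moreover have "{u, v, s} \<subseteq> ?L"
  proof -
    have "s \<in> ?L" using s gen_field_mono[of "{t1, t2}" "{t1, t2, t3, t4}" K] by auto
    moreover have "a \<in> ?L" "t3 \<in> ?L" "t4 \<in> ?L" using a by (auto intro: gen_field_gen gen_field_base)
    ultimately show ?thesis unfolding u_def v_def by (auto intro!: gen_field_closed)
  qed
  ultimately show ?thesis unfolding u_def v_def by (rule gen_field_eqI)
qed

lemma two_conics_to_surface:
  fixes a b c d p q t1 t2 t3 t4 :: "'a::field"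
  assumes K: "subfield K" and two: "(2::'a) \<noteq> 0" and a: "a \<in> K" "a \<noteq> 0"
    and b: "b \<noteq> 0" and cd: "c \<in> K" "d \<in> K" "c \<noteq> 0 \<or> d \<noteq> 0"
    and p: "p \<in> K" "q \<in> K" "p ^ 2 - a * q ^ 2 = b"
    and E1: "t1 ^ 2 - a * t2 ^ 2 = b" and E2: "t3 ^ 2 - a * t4 ^ 2 = 2 * c * t1 + d" and "t1 \<noteq> p"
  obtains x y s \<alpha> \<beta> \<gamma> where "\<alpha> \<in> K" "\<beta> \<in> K" "\<gamma> \<in> K" "\<alpha> \<noteq> 0 \<or> \<beta> \<noteq> 0 \<or> \<gamma> \<noteq> 0"
    "x ^ 2 - a * y ^ 2 = \<alpha> * s ^ 2 + \<beta> * s + \<gamma>"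
    "gen_field K {t1, t2, t3, t4} = gen_field K {x, y, s}"
proof -
  define s where "s = (t2 - q) / (t1 - p)"
  note param = conic_slope_param[OF two p(3) b E1 \<open>t1 \<noteq> p\<close>, folded s_def]
  define \<alpha> \<beta> \<gamma> where "\<alpha> = - a * (2 * c * p + d)" and "\<beta> = 4 * a * c * q" and "\<gamma> = d - 2 * c * p"
  have "(1 - a * s ^ 2) * t1 = (1 - a * s ^ 2) * p + (2 * a * q * s - 2 * p)"
    using param(1) by (subst param(2)) (simp add: field_simps)
  then have "(t3 + a * s * t4) ^ 2 - a * (t4 + s * t3) ^ 2 = \<alpha> * s ^ 2 + \<beta> * s + \<gamma>"
    unfolding \<alpha>_def \<beta>_def \<gamma>_def using E2 by algebra
  moreover have "\<alpha> \<in> K" "\<beta> \<in> K" "\<gamma> \<in> K"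
    unfolding \<alpha>_def \<beta>_def \<gamma>_def using K a cd p by (auto intro!: subfield_closed simp: subfield_numeral)
  moreover have "\<alpha> \<noteq> 0 \<or> \<beta> \<noteq> 0 \<or> \<gamma> \<noteq> 0"
    unfolding \<alpha>_def \<beta>_def \<gamma>_def using twisted_coeffs_nonzero[OF two a(2) b cd(3) p(3)] .
  moreover have "gen_field K {t1, t2, t3, t4} = gen_field K {t3 + a * s * t4, t4 + s * t3, s}"
  proof (rule gen_field_norm_twist[OF param(1) a(1)])
    have in_s: "s \<in> gen_field K {s}" "a \<in> gen_field K {s}" "p \<in> gen_field K {s}" "q \<in> gen_field K {s}"
      using a p by (auto intro: gen_field_gen gen_field_base)
    then show t1: "t1 \<in> gen_field K {s}"
      by (subst param(2)) (intro gen_field_closed gen_field_one gen_field_numeral)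
    then show "t2 \<in> gen_field K {s}"
      using in_s by (subst param(3)) (intro gen_field_closed)
    have "t1 \<in> gen_field K {t1, t2}" "t2 \<in> gen_field K {t1, t2}" "p \<in> gen_field K {t1, t2}"
      "q \<in> gen_field K {t1, t2}"
      using p by (auto intro: gen_field_gen gen_field_base)
    then show "s \<in> gen_field K {t1, t2}" unfolding s_def by (intro gen_field_closed)
  qed
  ultimately show thesis using that by blast
qed

lemma first_conic_not_rational_point:
  assumes K: "subfield K" and a: "a \<in> K" "a \<noteq> 0" and cd: "c \<in> K" "d \<in> K"
    and p: "p \<in> K" "q \<in> K" "p ^ 2 - a * q ^ 2 = b"
    and E1: "t1 ^ 2 - a * t2 ^ 2 = b" and E2: "t3 ^ 2 - a * t4 ^ 2 = 2 * c * t1 + d"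
    and pair: "has_indep_pair K (gen_field K {t1, t2, t3, t4})"
  shows "t1 \<noteq> p"
proof
  assume "t1 = p"
  with p(3) E1 have "p ^ 2 - a * q ^ 2 = p ^ 2 - a * t2 ^ 2" by simp
  then have "t2 \<in> K" by (rule norm_form_eq_first_coord[OF K a(2) p(2)])
  then have "{t1, t2, t3, t4} \<subseteq> gen_field K {t3, t4}"
    using \<open>t1 = p\<close> p(1) by (auto intro: gen_field_base gen_field_gen)
  moreover have "2 * c * p + d \<in> K" using K cd p by (auto intro!: subfield_closed simp: subfield_numeral)
  then have "alg_dependent_pair K t3 t4"
    by (rule alg_dependent_pair_quadratic[OF subfield_one[OF K] subfield_zero[OF K] subfield_zero[OF K]
          subfield_uminus[OF K a(1)] subfield_zero[OF K] subfield_uminus[OF K]])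
      (use E2 \<open>t1 = p\<close> in simp_all)
  ultimately show False using not_alg_dependent_pair_if_has_indep_pair[OF K pair] by blast
qed

theorem lemma1p8:
  fixes K :: "'a::field set" and a b c d t1 t2 t3 t4 :: 'a
  assumes "subfield K" and "infinite K" and "C1_field K" and "(2::'a) \<noteq> 0"
    and "\<not> alg_closed_in K"
    and "a \<in> K" and "\<not> (\<exists>y\<in>K. a = y ^ 2)"
    and "b \<in> K" and "c \<in> K" and "d \<in> K"
    and "b \<noteq> 0" and "c \<noteq> 0 \<or> d \<noteq> 0"
    and "has_trdeg K (gen_field K {t1, t2, t3, t4}) 2"
    and "t1 ^ 2 - a * t2 ^ 2 = b"
    and "t3 ^ 2 - a * t4 ^ 2 = 2 * c * t1 + d"
  shows "k_rational K (gen_field K {t1, t2, t3, t4})"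
proof -
  note K = assms(1) and C1 = assms(3) and two = assms(4) and a = assms(6) and nonsq = assms(7)
  have pair: "has_indep_pair K (gen_field K {t1, t2, t3, t4})"
    using assms(13) by (rule has_indep_pair_if_has_trdeg)
  have "a \<noteq> 0" using nonsquare_nonzero[OF K nonsq] .
  obtain p q where p: "p \<in> K" "q \<in> K" "p ^ 2 - a * q ^ 2 = b"
    using norm_form_represents[OF K C1 a nonsq assms(8,11)] .
  have "t1 \<noteq> p"
    using first_conic_not_rational_point[OF K a \<open>a \<noteq> 0\<close> assms(9,10) p assms(14,15) pair] .
  obtain x y s \<alpha> \<beta> \<gamma> where coeffs: "\<alpha> \<in> K" "\<beta> \<in> K" "\<gamma> \<in> K" "\<alpha> \<noteq> 0 \<or> \<beta> \<noteq> 0 \<or> \<gamma> \<noteq> 0"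
    and surface: "x ^ 2 - a * y ^ 2 = \<alpha> * s ^ 2 + \<beta> * s + \<gamma>"
    and L: "gen_field K {t1, t2, t3, t4} = gen_field K {x, y, s}"
    using two_conics_to_surface[OF K two a \<open>a \<noteq> 0\<close> assms(11,9,10,12) p assms(14,15) \<open>t1 \<noteq> p\<close>] .
  interpret norm_quadric_surface K a \<alpha> \<beta> \<gamma> x y s
    using K C1 two a nonsq coeffs surface pair unfolding L by unfold_locales
  show ?thesis unfolding L by (rule k_rational)
qed

end
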